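(* Let $f\colon[a,b]\to\mathbb{R}$ be Laplace integrable on $[a,b]$ and let $g\colon[a,b]\to\mathbb{R}$ be of bounded variation. Put $F(x)=\int_a^xf$ and $G(x)=\int_a^xg$ for $x\in[a,b]$. Then $fG$ is Laplace integrable on $[a,b]$ and \[\int_a^bfG=F(b)G(b)-(\mathsf{P})\int_a^bFg,\] where $(\mathsf{P})\int_a^b$ denotes the Perron integral.
   Context: Laplace integral on $[a,b]$: with lower/upper Laplace derivates $\underline{LD}_1F(x)$, $\overline{LD}_1F(x)$ being the minimum of the $\liminf$'s, resp. maximum of the $\limsup$'s, as $s\to\infty$ of $s^2\int_0^\delta e^{-st}[F(x+t)-F(x)]dt$ and $(-s^2)\int_0^\delta e^{-st}[F(x-t)-F(x)]dt$ (one-sided at endpoints), a major function of $f$ is a continuous $U$ with $\underline{LD}_1U\geqslant f$, $\underline{LD}_1U>-\infty$ everywhere on $[a,b]$, a minor function a continuous $V$ with $\overline{LD}_1V\leqslant f$, $\overline{LD}_1V<\infty$ everywhere, and $f$ is Laplace integrable if $\sup_V(V(b)-V(a))=\inf_U(U(b)-U(a))$ is finite, this value being $\int_a^bf$. *)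

theory Defs
  imports "HOL-Analysis.Analysis"
begin

definition lap_right :: "(real \<Rightarrow> real) \<Rightarrow> real \<Rightarrow> real \<Rightarrow> real \<Rightarrow> real" where
  "lap_right F b x s = s^2 * integral {0..b - x} (\<lambda>t. exp (- s * t) * (F (x + t) - F x))"

definition lap_left :: "(real \<Rightarrow> real) \<Rightarrow> real \<Rightarrow> real \<Rightarrow> real \<Rightarrow> real" where
  "lap_left F a x s = - (s^2) * integral {0..x - a} (\<lambda>t. exp (- s * t) * (F (x - t) - F x))"

definition lower_LD :: "(real \<Rightarrow> real) \<Rightarrow> real \<Rightarrow> real \<Rightarrow> real \<Rightarrow> ereal" where
  "lower_LD F a b x =
     (if x = a then Liminf at_top (\<lambda>s. ereal (lap_right F b x s))
      else if x = b then Liminf at_top (\<lambda>s. ereal (lap_left F a x s))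
      else min (Liminf at_top (\<lambda>s. ereal (lap_right F b x s)))
               (Liminf at_top (\<lambda>s. ereal (lap_left F a x s))))"

definition upper_LD :: "(real \<Rightarrow> real) \<Rightarrow> real \<Rightarrow> real \<Rightarrow> real \<Rightarrow> ereal" where
  "upper_LD F a b x =
     (if x = a then Limsup at_top (\<lambda>s. ereal (lap_right F b x s))
      else if x = b then Limsup at_top (\<lambda>s. ereal (lap_left F a x s))
      else max (Limsup at_top (\<lambda>s. ereal (lap_right F b x s)))
               (Limsup at_top (\<lambda>s. ereal (lap_left F a x s))))"

definition laplace_major :: "(real \<Rightarrow> real) \<Rightarrow> real \<Rightarrow> real \<Rightarrow> (real \<Rightarrow> real) \<Rightarrow> bool" where
  "laplace_major f a b U \<longleftrightarrow> continuous_on {a..b} U \<and>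
     (\<forall>x\<in>{a..b}. lower_LD U a b x \<ge> ereal (f x) \<and> lower_LD U a b x > -\<infinity>)"

definition laplace_minor :: "(real \<Rightarrow> real) \<Rightarrow> real \<Rightarrow> real \<Rightarrow> (real \<Rightarrow> real) \<Rightarrow> bool" where
  "laplace_minor f a b V \<longleftrightarrow> continuous_on {a..b} V \<and>
     (\<forall>x\<in>{a..b}. upper_LD V a b x \<le> ereal (f x) \<and> upper_LD V a b x < \<infinity>)"

definition laplace_integrable :: "(real \<Rightarrow> real) \<Rightarrow> real \<Rightarrow> real \<Rightarrow> bool" where
  "laplace_integrable f a b \<longleftrightarrow>
     (SUP V\<in>{V. laplace_minor f a b V}. ereal (V b - V a)) =
     (INF U\<in>{U. laplace_major f a b U}. ereal (U b - U a)) \<and>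
     \<bar>INF U\<in>{U. laplace_major f a b U}. ereal (U b - U a)\<bar> \<noteq> \<infinity>"

definition laplace_integral :: "(real \<Rightarrow> real) \<Rightarrow> real \<Rightarrow> real \<Rightarrow> real" where
  "laplace_integral f a b =
     (if a < b then real_of_ereal (INF U\<in>{U. laplace_major f a b U}. ereal (U b - U a)) else 0)"

definition lower_D :: "(real \<Rightarrow> real) \<Rightarrow> real \<Rightarrow> real \<Rightarrow> real \<Rightarrow> ereal" where
  "lower_D F a b x = Liminf (at x within {a..b}) (\<lambda>y. ereal ((F y - F x) / (y - x)))"

definition upper_D :: "(real \<Rightarrow> real) \<Rightarrow> real \<Rightarrow> real \<Rightarrow> real \<Rightarrow> ereal" where
  "upper_D F a b x = Limsup (at x within {a..b}) (\<lambda>y. ereal ((F y - F x) / (y - x)))"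

definition perron_major :: "(real \<Rightarrow> real) \<Rightarrow> real \<Rightarrow> real \<Rightarrow> (real \<Rightarrow> real) \<Rightarrow> bool" where
  "perron_major f a b U \<longleftrightarrow> continuous_on {a..b} U \<and>
     (\<forall>x\<in>{a..b}. lower_D U a b x \<ge> ereal (f x) \<and> lower_D U a b x > -\<infinity>)"

definition perron_minor :: "(real \<Rightarrow> real) \<Rightarrow> real \<Rightarrow> real \<Rightarrow> (real \<Rightarrow> real) \<Rightarrow> bool" where
  "perron_minor f a b V \<longleftrightarrow> continuous_on {a..b} V \<and>
     (\<forall>x\<in>{a..b}. upper_D V a b x \<le> ereal (f x) \<and> upper_D V a b x < \<infinity>)"

definition perron_integrable :: "(real \<Rightarrow> real) \<Rightarrow> real \<Rightarrow> real \<Rightarrow> bool" where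
  "perron_integrable f a b \<longleftrightarrow>
     (SUP V\<in>{V. perron_minor f a b V}. ereal (V b - V a)) =
     (INF U\<in>{U. perron_major f a b U}. ereal (U b - U a)) \<and>
     \<bar>INF U\<in>{U. perron_major f a b U}. ereal (U b - U a)\<bar> \<noteq> \<infinity>"

definition perron_integral :: "(real \<Rightarrow> real) \<Rightarrow> real \<Rightarrow> real \<Rightarrow> real" where
  "perron_integral f a b =
     (if a < b then real_of_ereal (INF U\<in>{U. perron_major f a b U}. ereal (U b - U a)) else 0)"

definition bounded_variation_on :: "(real \<Rightarrow> real) \<Rightarrow> real \<Rightarrow> real \<Rightarrow> bool" where
  "bounded_variation_on g a b \<longleftrightarrow>
     (\<exists>M. \<forall>xs. sorted xs \<and> set xs \<subseteq> {a..b} \<longrightarrow>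
        (\<Sum>i<length xs - 1. \<bar>g (xs ! Suc i) - g (xs ! i)\<bar>) \<le> M)"

end

theory Submission
  imports Defs "HOL-Real_Asymp.Real_Asymp"
begin

text \<open>
  Let G be the indefinite integral of g and c a bound for \<bar>G\<bar>. If U is a Laplace major and V a
  Laplace minor function of f, then U (G + c) - c V - \<integral> U g is a major function of f G: near a
  point x it differs from (G x + c) U - c V by a function whose one-sided derivatives at x vanish
  (the one-sided limits of g give those of G and of \<integral> U g), so its Laplace quotients tend to 0,
  while the nonnegative coefficients G x + c and c transfer the derivate bounds of U and V.
  Symmetrically V (G + c) - c U - \<integral> V g is a minor function. Taking U and V uniformly close to
  the indefinite integral F of f makes the increments of both close to F b G b - \<integral> F g.
  The integrals of g, U g and F g are Henstock-Kurzweil integrals; continuous functions times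
  functions of bounded variation are Darboux integrable, and the piecewise linear functions with the
  Darboux suprema and infima as slopes are Laplace and Perron major and minor functions, so these
  integrals coincide with the Laplace and the Perron integrals.
\<close>

section \<open>Laplace quotients\<close>

lemma laplace_quotient_t_eq:
  fixes s d :: real
  assumes "s > 0" "d \<ge> 0"
  shows "s\<^sup>2 * integral {0..d} (\<lambda>t. exp (- s * t) * t) = 1 - exp (- s * d) * (s * d + 1)"
proof -
  let ?P = "\<lambda>t. - exp (- s * t) * (s * t + 1) / s\<^sup>2"
  have "((\<lambda>t. exp (- s * t) * t) has_integral ?P d - ?P 0) {0..d}"
  proof (rule fundamental_theorem_of_calculus[OF assms(2)])
    fix x :: real
    have "(?P has_real_derivative exp (- s * x) * x) (at x)"
      using assms(1) by (auto intro!: derivative_eq_intros simp: field_simps power2_eq_square)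
    then show "(?P has_vector_derivative exp (- s * x) * x) (at x within {0..d})"
      by (simp add: has_real_derivative_iff_has_vector_derivative has_vector_derivative_at_within)
  qed
  then show ?thesis
    using assms by (simp add: integral_unique field_simps)
qed

lemma laplace_quotient_t2_le:
  fixes s d :: real
  assumes "s > 0" "d \<ge> 0"
  shows "s\<^sup>2 * integral {0..d} (\<lambda>t. exp (- s * t) * t\<^sup>2) \<le> 2 / s"
proof -
  let ?q = "\<lambda>t. s\<^sup>2 * t\<^sup>2 + 2 * s * t + 2"
  let ?P = "\<lambda>t. - exp (- s * t) * ?q t / s ^ 3"
  have "((\<lambda>t. exp (- s * t) * t\<^sup>2) has_integral ?P d - ?P 0) {0..d}"
  proof (rule fundamental_theorem_of_calculus[OF assms(2)])
    fix x :: real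
    have "(?P has_real_derivative exp (- s * x) * x\<^sup>2) (at x)"
      using assms(1)
      by (auto intro!: derivative_eq_intros simp: field_simps power2_eq_square power3_eq_cube)
    then show "(?P has_vector_derivative exp (- s * x) * x\<^sup>2) (at x within {0..d})"
      by (simp add: has_real_derivative_iff_has_vector_derivative has_vector_derivative_at_within)
  qed
  then have "s\<^sup>2 * integral {0..d} (\<lambda>t. exp (- s * t) * t\<^sup>2) = (2 - exp (- s * d) * ?q d) / s"
    using assms by (simp add: integral_unique field_simps power2_eq_square power3_eq_cube)
  moreover have "0 \<le> exp (- s * d) * ?q d"
    using assms by simp
  ultimately show ?thesis
    using assms by (simp add: divide_right_mono)
qed

lemma laplace_quotient_t_tendsto:
  fixes d :: real
  assumes "d > 0"
  shows "((\<lambda>s. s\<^sup>2 * integral {0..d} (\<lambda>t. exp (- s * t) * t)) \<longlongrightarrow> 1) at_top"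
proof -
  have "((\<lambda>s. 1 - exp (- s * d) * (s * d + 1)) \<longlongrightarrow> 1) at_top"
    using assms by real_asymp
  moreover have "eventually (\<lambda>s. 1 - exp (- s * d) * (s * d + 1)
      = s\<^sup>2 * integral {0..d} (\<lambda>t. exp (- s * t) * t)) at_top"
    using eventually_gt_at_top[of 0] by eventually_elim (use laplace_quotient_t_eq assms in force)
  ultimately show ?thesis
    by (rule Lim_transform_eventually)
qed

lemma laplace_quotient_le:
  fixes h :: "real \<Rightarrow> real"
  assumes s: "s > 0" and h: "continuous_on {0..d} h" and "e \<ge> 0" "C \<ge> 0"
    and le: "\<And>t. t \<in> {0..d} \<Longrightarrow> h t \<le> e * t + C * t\<^sup>2"
  shows "s\<^sup>2 * integral {0..d} (\<lambda>t. exp (- s * t) * h t) \<le> e + 2 * C / s"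
proof (cases "d \<ge> 0")
  case False
  then show ?thesis
    using assms by simp
next
  case True
  have "integral {0..d} (\<lambda>t. exp (- s * t) * h t)
      \<le> integral {0..d} (\<lambda>t. e * (exp (- s * t) * t) + C * (exp (- s * t) * t\<^sup>2))"
  proof (intro integral_le integrable_continuous_interval continuous_intros h)
    fix t assume "t \<in> {0..d}"
    then have "exp (- s * t) * h t \<le> exp (- s * t) * (e * t + C * t\<^sup>2)"
      using le by (intro mult_left_mono) auto
    then show "exp (- s * t) * h t \<le> e * (exp (- s * t) * t) + C * (exp (- s * t) * t\<^sup>2)"
      by (simp add: algebra_simps)
  qed
  also have "\<dots> = e * integral {0..d} (\<lambda>t. exp (- s * t) * t)
      + C * integral {0..d} (\<lambda>t. exp (- s * t) * t\<^sup>2)"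
    by (subst integral_add) (auto intro!: integrable_continuous_interval continuous_intros)
  finally have "s\<^sup>2 * integral {0..d} (\<lambda>t. exp (- s * t) * h t)
      \<le> s\<^sup>2 * (e * integral {0..d} (\<lambda>t. exp (- s * t) * t)
        + C * integral {0..d} (\<lambda>t. exp (- s * t) * t\<^sup>2))"
    by (intro mult_left_mono) simp_all
  also have "\<dots> = e * (s\<^sup>2 * integral {0..d} (\<lambda>t. exp (- s * t) * t))
        + C * (s\<^sup>2 * integral {0..d} (\<lambda>t. exp (- s * t) * t\<^sup>2))"
    by (simp add: algebra_simps)
  also have "\<dots> \<le> e * 1 + C * (2 / s)"
    using laplace_quotient_t_eq[OF s True] laplace_quotient_t2_le[OF s True] assms True
    by (intro add_mono mult_left_mono) auto
  finally show ?thesis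
    by (simp add: mult.commute)
qed

lemma le_linear_plus_quadratic:
  fixes h :: "real \<Rightarrow> real"
  assumes "\<rho> > 0" "e \<ge> 0" "B \<ge> 0"
    and "\<And>t. t \<in> {0..d} \<Longrightarrow> h t \<le> B" and "\<And>t. t \<in> {0..\<rho>} \<Longrightarrow> h t \<le> e * t"
    and t: "t \<in> {0..d}"
  shows "h t \<le> e * t + B / \<rho>\<^sup>2 * t\<^sup>2"
proof (cases "t \<le> \<rho>")
  case True
  then show ?thesis
    using assms by (smt (verit) atLeastAtMost_iff divide_nonneg_nonneg mult_nonneg_nonneg zero_le_power2)
next
  case False
  then have "1 \<le> t\<^sup>2 / \<rho>\<^sup>2"
    using assms by (simp add: power_mono)
  then have "B \<le> B / \<rho>\<^sup>2 * t\<^sup>2"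
    using assms by (metis mult.right_neutral mult_left_mono times_divide_eq_left times_divide_eq_right)
  then show ?thesis
    using assms by (smt (verit) atLeastAtMost_iff mult_nonneg_nonneg)
qed

lemma abs_laplace_quotient_le:
  fixes r :: "real \<Rightarrow> real"
  assumes s: "s > 0" and r: "continuous_on {0..d} r" and "\<rho> > 0" "e \<ge> 0" "B \<ge> 0"
    and B: "\<And>t. t \<in> {0..d} \<Longrightarrow> \<bar>r t\<bar> \<le> B" and small: "\<And>t. t \<in> {0..\<rho>} \<Longrightarrow> \<bar>r t\<bar> \<le> e * t"
  shows "\<bar>s\<^sup>2 * integral {0..d} (\<lambda>t. exp (- s * t) * r t)\<bar> \<le> e + 2 * (B / \<rho>\<^sup>2) / s"
proof -
  have up: "s\<^sup>2 * integral {0..d} (\<lambda>t. exp (- s * t) * q t) \<le> e + 2 * (B / \<rho>\<^sup>2) / s"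
    if q: "continuous_on {0..d} q" "\<And>t. \<bar>q t\<bar> = \<bar>r t\<bar>" for q
  proof (rule laplace_quotient_le[OF s q(1)])
    fix t
    assume "t \<in> {0..d}"
    then show "q t \<le> e * t + B / \<rho>\<^sup>2 * t\<^sup>2"
      using le_linear_plus_quadratic[of \<rho> e B d q t] assms q(2) abs_ge_self by (smt (verit))
  qed (use assms in auto)
  have "integral {0..d} (\<lambda>t. exp (- s * t) * - r t) = - integral {0..d} (\<lambda>t. exp (- s * t) * r t)"
    by (simp add: integral_neg)
  then show ?thesis
    using up[OF r] up[of "\<lambda>t. - r t"] r by (auto intro: continuous_intros simp: abs_le_iff)
qed

lemma laplace_quotient_tendsto_0:
  fixes r :: "real \<Rightarrow> real"
  assumes d: "d > 0" and r: "continuous_on {0..d} r" and r0: "r 0 = 0"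
    and lim: "((\<lambda>t. r t / t) \<longlongrightarrow> 0) (at_right 0)"
  shows "((\<lambda>s. s\<^sup>2 * integral {0..d} (\<lambda>t. exp (- s * t) * r t)) \<longlongrightarrow> 0) at_top"
proof (rule tendstoI)
  fix e :: real
  assume e: "e > 0"
  obtain B where B: "\<And>t. t \<in> {0..d} \<Longrightarrow> \<bar>r t\<bar> \<le> B"
    using compact_imp_bounded[OF compact_continuous_image[OF r compact_Icc]]
    unfolding bounded_iff by (metis image_eqI real_norm_def)
  have B0: "B \<ge> 0"
    using B[of 0] d by auto
  obtain \<eta> where \<eta>: "\<eta> > 0" "\<And>t. 0 < t \<Longrightarrow> t < \<eta> \<Longrightarrow> \<bar>r t / t\<bar> < e / 2"
    using tendstoD[OF lim, of "e / 2"] e by (auto simp: eventually_at_right_field dist_real_def)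
  have small: "\<bar>r t\<bar> \<le> e / 2 * t" if "t \<in> {0..\<eta> / 2}" for t
  proof (cases "t = 0")
    case False
    then have "\<bar>r t\<bar> = t * \<bar>r t / t\<bar>"
      using that by (simp add: abs_divide)
    also have "\<dots> \<le> t * (e / 2)"
      using \<eta>(2)[of t] that False by (intro mult_left_mono) auto
    finally show ?thesis
      by (simp add: mult.commute)
  qed (simp add: r0)
  have "((\<lambda>s. 2 * (B / (\<eta> / 2)\<^sup>2) / s) \<longlongrightarrow> 0) at_top"
    by real_asymp
  then have "eventually (\<lambda>s. 2 * (B / (\<eta> / 2)\<^sup>2) / s < e / 2) at_top"
    using e by (intro order_tendstoD(2)) auto
  then show "eventually (\<lambda>s. dist (s\<^sup>2 * integral {0..d} (\<lambda>t. exp (- s * t) * r t)) 0 < e) at_top"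
    using eventually_gt_at_top[of 0]
  proof eventually_elim
    case (elim s)
    with abs_laplace_quotient_le[where \<rho> = "\<eta> / 2" and e = "e / 2", OF elim(2) r _ _ B0 B small] \<eta>(1) e
    show ?case
      by fastforce
  qed
qed

lemma laplace_quotient_tendsto:
  fixes h :: "real \<Rightarrow> real"
  assumes d: "d > 0" and h: "continuous_on {0..d} h"
    and lim: "((\<lambda>t. h t / t) \<longlongrightarrow> m) (at_right 0)"
  shows "((\<lambda>s. s\<^sup>2 * integral {0..d} (\<lambda>t. exp (- s * t) * h t)) \<longlongrightarrow> m) at_top"
proof -
  have "(h \<longlongrightarrow> 0 * m) (at_right 0)"
  proof (rule Lim_transform_eventually)
    show "((\<lambda>t. t * (h t / t)) \<longlongrightarrow> 0 * m) (at_right 0)"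
      by (intro tendsto_intros lim)
    show "eventually (\<lambda>t. t * (h t / t) = h t) (at_right (0::real))"
      by (simp add: eventually_at_right_field) (auto intro!: exI[of _ 1])
  qed
  with continuous_on_Icc_at_rightD[OF h d] have h0: "h 0 = 0"
    using tendsto_unique trivial_limit_at_right_real by fastforce
  define r where "r t = h t - m * t" for t
  have r: "continuous_on {0..d} r"
    unfolding r_def by (intro continuous_intros h)
  have "((\<lambda>t. r t / t) \<longlongrightarrow> 0) (at_right 0)"
  proof (rule Lim_transform_eventually)
    show "((\<lambda>t. h t / t - m) \<longlongrightarrow> 0) (at_right 0)"
      using tendsto_diff[OF lim tendsto_const[of m]] by simp
    show "eventually (\<lambda>t. h t / t - m = r t / t) (at_right (0::real))"
      by (simp add: eventually_at_right_field) (auto intro!: exI[of _ 1] simp: r_def diff_divide_distrib)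
  qed
  from tendsto_add[OF tendsto_mult[OF tendsto_const laplace_quotient_t_tendsto[OF d]]
      laplace_quotient_tendsto_0[OF d r _ this]]
  have "((\<lambda>s. m * (s\<^sup>2 * integral {0..d} (\<lambda>t. exp (- s * t) * t))
       + s\<^sup>2 * integral {0..d} (\<lambda>t. exp (- s * t) * r t)) \<longlongrightarrow> m) at_top"
    using h0 by (simp add: r_def)
  moreover have "m * (s\<^sup>2 * integral {0..d} (\<lambda>t. exp (- s * t) * t))
       + s\<^sup>2 * integral {0..d} (\<lambda>t. exp (- s * t) * r t)
     = s\<^sup>2 * integral {0..d} (\<lambda>t. exp (- s * t) * h t)" for s
  proof -
    have "integral {0..d} (\<lambda>t. exp (- s * t) * h t)
        = integral {0..d} (\<lambda>t. m * (exp (- s * t) * t) + exp (- s * t) * r t)"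
      by (simp add: r_def algebra_simps)
    also have "\<dots> = m * integral {0..d} (\<lambda>t. exp (- s * t) * t) + integral {0..d} (\<lambda>t. exp (- s * t) * r t)"
      using r by (subst integral_add) (auto intro!: integrable_continuous_interval continuous_intros)
    finally show ?thesis
      by (simp add: algebra_simps)
  qed
  ultimately show ?thesis
    by simp
qed

lemma continuous_on_translate_Icc:
  fixes U :: "real \<Rightarrow> real"
  assumes "continuous_on {x..b} U"
  shows "continuous_on {0..b - x} (\<lambda>t. U (x + t))"
  by (rule continuous_on_compose2[OF assms]) (auto intro!: continuous_intros)

lemma lap_right_add:
  assumes "continuous_on {x..b} U" "continuous_on {x..b} V"
  shows "lap_right (\<lambda>y. U y + V y) b x s = lap_right U b x s + lap_right V b x s"
proof -
  have int: "(\<lambda>t. exp (- s * t) * (W (x + t) - W x)) integrable_on {0..b - x}"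
    if "continuous_on {x..b} W" for W
    by (intro integrable_continuous_interval continuous_intros continuous_on_translate_Icc that)
  have "(\<lambda>t. exp (- s * t) * (U (x + t) + V (x + t) - (U x + V x)))
      = (\<lambda>t. exp (- s * t) * (U (x + t) - U x) + exp (- s * t) * (V (x + t) - V x))"
    by (auto simp: algebra_simps)
  then show ?thesis
    unfolding lap_right_def using int[OF assms(1)] int[OF assms(2)]
    by (simp add: integral_add distrib_left)
qed

lemma lap_right_cmult: "lap_right (\<lambda>y. c * U y) b x s = c * lap_right U b x s"
proof -
  have "(\<lambda>t. exp (- s * t) * (c * U (x + t) - c * U x)) = (\<lambda>t. c * (exp (- s * t) * (U (x + t) - U x)))"
    by (auto simp: algebra_simps)
  then show ?thesis
    by (simp add: lap_right_def)
qed

lemma lap_right_uminus: "lap_right (\<lambda>y. - U y) b x s = - lap_right U b x s"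
  using lap_right_cmult[of "- 1" U b x s] by simp

lemma lap_left_uminus: "lap_left (\<lambda>y. - U y) a x s = - lap_left U a x s"
proof -
  have "(\<lambda>t. exp (- s * t) * (- U (x - t) - - U x)) = (\<lambda>t. - (exp (- s * t) * (U (x - t) - U x)))"
    by (auto simp: algebra_simps)
  then show ?thesis
    by (simp add: lap_left_def)
qed

lemma lap_right_ident: "lap_right (\<lambda>y. y) b x s = s\<^sup>2 * integral {0..b - x} (\<lambda>t. exp (- s * t) * t)"
  by (simp add: lap_right_def)

lemma lap_left_reflect: "lap_left F a x s = lap_right (\<lambda>y. - F (- y)) (- a) (- x) s"
proof -
  have "(\<lambda>t. exp (- s * t) * (- F (- (- x + t)) - - F (- (- x)))) = (\<lambda>t. - (exp (- s * t) * (F (x - t) - F x)))"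
    by (auto simp: algebra_simps)
  then show ?thesis
    by (simp add: lap_left_def lap_right_def)
qed

lemma lap_right_tendsto:
  fixes M :: "real \<Rightarrow> real"
  assumes "x < b" "continuous_on {x..b} M" "((\<lambda>t. (M (x + t) - M x) / t) \<longlongrightarrow> m) (at_right 0)"
  shows "((\<lambda>s. lap_right M b x s) \<longlongrightarrow> m) at_top"
  unfolding lap_right_def using assms
  by (intro laplace_quotient_tendsto continuous_intros continuous_on_translate_Icc) auto

lemma lap_left_tendsto:
  fixes M :: "real \<Rightarrow> real"
  assumes "a < x" "continuous_on {a..x} M" "((\<lambda>t. (M x - M (x - t)) / t) \<longlongrightarrow> m) (at_right 0)"
  shows "((\<lambda>s. lap_left M a x s) \<longlongrightarrow> m) at_top"
proof -
  have "continuous_on {0..x - a} (\<lambda>t. M (x - t))"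
    by (rule continuous_on_compose2[OF assms(2)]) (auto intro!: continuous_intros)
  then have "((\<lambda>s. s\<^sup>2 * integral {0..x - a} (\<lambda>t. exp (- s * t) * (M x - M (x - t)))) \<longlongrightarrow> m) at_top"
    using assms by (intro laplace_quotient_tendsto continuous_intros) auto
  then show ?thesis
    by (simp add: lap_left_reflect lap_right_def)
qed

section \<open>Major and minor functions\<close>

lemma ereal_le_Liminf_real_iff:
  "ereal c \<le> Liminf F (\<lambda>s. ereal (X s)) \<longleftrightarrow> (\<forall>e>0. eventually (\<lambda>s. c - e < X s) F)"
proof -
  have "(\<forall>y<ereal c. eventually (\<lambda>s. y < ereal (X s)) F) \<longleftrightarrow> (\<forall>e>0. eventually (\<lambda>s. c - e < X s) F)"
  proof safe
    fix e :: real
    assume "\<forall>y<ereal c. eventually (\<lambda>s. y < ereal (X s)) F" "e > 0"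
    then show "eventually (\<lambda>s. c - e < X s) F"
      by (auto dest: spec[of _ "ereal (c - e)"])
  next
    fix y
    assume H: "\<forall>e>0. eventually (\<lambda>s. c - e < X s) F" and y: "y < ereal c"
    show "eventually (\<lambda>s. y < ereal (X s)) F"
    proof (cases y)
      case (real r)
      with y H[rule_format, of "c - r"] show ?thesis
        by auto
    qed (use y in auto)
  qed
  then show ?thesis
    by (simp add: le_Liminf_iff)
qed

lemma Liminf_ereal_uminus: "Liminf F (\<lambda>s. ereal (- X s)) = - Limsup F (\<lambda>s. ereal (X s))"
  using ereal_Liminf_uminus[of F "\<lambda>s. ereal (X s)"] by simp

lemma upper_LD_eq_uminus_lower_LD: "upper_LD V a b x = - lower_LD (\<lambda>y. - V y) a b x"
  by (auto simp: upper_LD_def lower_LD_def lap_right_uminus lap_left_uminus Liminf_ereal_uminus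
      min_def max_def ereal_uminus_le_reorder)

lemma upper_D_eq_uminus_lower_D: "upper_D V a b x = - lower_D (\<lambda>y. - V y) a b x"
proof -
  have "(- V y - - V x) / (y - x) = - ((V y - V x) / (y - x))" for y
    by (simp add: minus_divide_left)
  then show ?thesis
    by (simp add: upper_D_def lower_D_def Liminf_ereal_uminus)
qed

lemma continuous_on_uminus_iff:
  fixes V :: "real \<Rightarrow> real"
  shows "continuous_on S (\<lambda>x. - V x) \<longleftrightarrow> continuous_on S V"
  using continuous_on_minus[of S "\<lambda>x. - V x"] continuous_on_minus[of S V] by auto

lemma laplace_minor_iff_major_uminus:
  "laplace_minor \<phi> a b V \<longleftrightarrow> laplace_major (\<lambda>x. - \<phi> x) a b (\<lambda>x. - V x)"
  by (simp add: laplace_minor_def laplace_major_def upper_LD_eq_uminus_lower_LD continuous_on_uminus_iff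
      ereal_uminus_le_reorder ereal_uminus_eq_reorder)

lemma perron_minor_iff_major_uminus:
  "perron_minor \<phi> a b V \<longleftrightarrow> perron_major (\<lambda>x. - \<phi> x) a b (\<lambda>x. - V x)"
  by (simp add: perron_minor_def perron_major_def upper_D_eq_uminus_lower_D continuous_on_uminus_iff
      ereal_uminus_le_reorder ereal_uminus_eq_reorder)

lemma ereal_le_imp_gt_MInf: "ereal c \<le> L \<Longrightarrow> - \<infinity> < L"
  by (cases L) auto

lemma laplace_major_iff:
  assumes "a < b"
  shows "laplace_major \<phi> a b U \<longleftrightarrow> continuous_on {a..b} U \<and>
     (\<forall>x\<in>{a..<b}. \<forall>e>0. eventually (\<lambda>s. \<phi> x - e < lap_right U b x s) at_top) \<and>
     (\<forall>x\<in>{a<..b}. \<forall>e>0. eventually (\<lambda>s. \<phi> x - e < lap_left U a x s) at_top)"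
proof -
  have "ereal (\<phi> x) \<le> lower_LD U a b x \<and> - \<infinity> < lower_LD U a b x \<longleftrightarrow>
      (x < b \<longrightarrow> (\<forall>e>0. eventually (\<lambda>s. \<phi> x - e < lap_right U b x s) at_top)) \<and>
      (a < x \<longrightarrow> (\<forall>e>0. eventually (\<lambda>s. \<phi> x - e < lap_left U a x s) at_top))"
    if "x \<in> {a..b}" for x
    using that assms ereal_le_imp_gt_MInf
    by (auto simp: lower_LD_def ereal_le_Liminf_real_iff)
  then show ?thesis
    unfolding laplace_major_def by auto
qed

lemma perron_major_iff:
  "perron_major \<phi> a b U \<longleftrightarrow> continuous_on {a..b} U \<and>
     (\<forall>x\<in>{a..b}. \<forall>e>0. eventually (\<lambda>y. \<phi> x - e < (U y - U x) / (y - x)) (at x within {a..b}))"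
  using ereal_le_imp_gt_MInf
  by (auto simp: perron_major_def lower_D_def ereal_le_Liminf_real_iff[symmetric])

lemma le_if_no_tilted_max:
  fixes H :: "real \<Rightarrow> real"
  assumes H: "continuous_on {c..d} H" and "c \<le> d"
    and no_max: "\<And>\<eta> x. \<eta> > 0 \<Longrightarrow> x \<in> {c..<d} \<Longrightarrow> (\<And>y. y \<in> {c..d} \<Longrightarrow> H y + \<eta> * y \<le> H x + \<eta> * x) \<Longrightarrow> False"
  shows "H c \<le> H d"
proof (rule ccontr)
  assume "\<not> H c \<le> H d"
  then have Hcd: "H d < H c"
    by simp
  then have "c \<noteq> d"
    by auto
  with \<open>c \<le> d\<close> Hcd have cd: "c < d" "H d < H c"
    by simp_all
  define \<eta> where "\<eta> = (H c - H d) / (2 * (d - c))"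
  have \<eta>: "\<eta> > 0"
    using cd by (simp add: \<eta>_def)
  have K: "continuous_on {c..d} (\<lambda>y. H y + \<eta> * y)"
    by (intro continuous_intros H)
  obtain x where x: "x \<in> {c..d}" "\<And>y. y \<in> {c..d} \<Longrightarrow> H y + \<eta> * y \<le> H x + \<eta> * x"
    using continuous_attains_sup[OF compact_Icc _ K] cd by auto
  have "\<eta> * (d - c) = (H c - H d) / 2"
    using cd by (simp add: \<eta>_def field_simps)
  then have "H d + \<eta> * d < H c + \<eta> * c"
    using cd by (simp add: algebra_simps)
  then have "x \<noteq> d"
    using x(2)[of c] cd by auto
  then show False
    using no_max[OF \<eta>, of x] x by auto
qed

lemma lap_right_le_at_local_max:
  fixes K :: "real \<Rightarrow> real"
  assumes K: "continuous_on {x..b} K" and \<rho>: "0 < \<rho>" "\<rho> \<le> b - x"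
    and max: "\<And>t. t \<in> {0..\<rho>} \<Longrightarrow> K (x + t) \<le> K x"
  obtains C where "\<And>s. s > 0 \<Longrightarrow> lap_right K b x s \<le> C / s"
proof -
  define h where "h t = K (x + t) - K x" for t
  have h: "continuous_on {0..b - x} h"
    unfolding h_def by (intro continuous_intros continuous_on_translate_Icc K)
  obtain B where B: "\<And>t. t \<in> {0..b - x} \<Longrightarrow> \<bar>h t\<bar> \<le> B"
    using compact_imp_bounded[OF compact_continuous_image[OF h compact_Icc]]
    unfolding bounded_iff by (metis image_eqI real_norm_def)
  have B0: "B \<ge> 0"
    using B[of 0] \<rho> by auto
  have "h t \<le> 0 * t + B / \<rho>\<^sup>2 * t\<^sup>2" if "t \<in> {0..b - x}" for t
    using le_linear_plus_quadratic[OF \<rho>(1) order_refl B0 _ _ that, of h] B max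
    by (auto simp: h_def abs_le_iff)
  from laplace_quotient_le[OF _ h order_refl _ this] B0
  show ?thesis
    by (intro that[of "2 * (B / \<rho>\<^sup>2)"]) (simp add: lap_right_def h_def)
qed

text \<open>At a maximum x of H y + \<eta> y on [c,d] the Laplace quotient of H y + \<eta> y is O(1/s),
  while by hypothesis it is eventually close to at least \<eta>.\<close>

lemma le_if_lap_right_nonneg:
  fixes H :: "real \<Rightarrow> real"
  assumes H: "continuous_on {a..b} H" and cd: "a \<le> c" "c \<le> d" "d \<le> b"
    and R: "\<And>x e. x \<in> {a..<b} \<Longrightarrow> e > 0 \<Longrightarrow> eventually (\<lambda>s. - e < lap_right H b x s) at_top"
  shows "H c \<le> H d"
proof (rule le_if_no_tilted_max[where H = H and c = c and d = d])
  show "continuous_on {c..d} H"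
    using H by (rule continuous_on_subset) (use cd in auto)
  fix \<eta> x
  assume \<eta>: "\<eta> > 0" and x: "x \<in> {c..<d}" and max: "\<And>y. y \<in> {c..d} \<Longrightarrow> H y + \<eta> * y \<le> H x + \<eta> * x"
  have Hx: "continuous_on {x..b} H"
    using H by (rule continuous_on_subset) (use x cd in auto)
  obtain C where upper: "\<And>s. s > 0 \<Longrightarrow> lap_right (\<lambda>y. H y + \<eta> * y) b x s \<le> C / s"
    by (rule lap_right_le_at_local_max[of x b "\<lambda>y. H y + \<eta> * y" "d - x"]) (use max x cd in \<open>auto intro!: continuous_intros Hx\<close>)
  have split: "lap_right (\<lambda>y. H y + \<eta> * y) b x s
      = lap_right H b x s + \<eta> * (s\<^sup>2 * integral {0..b - x} (\<lambda>t. exp (- s * t) * t))" for s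
  proof -
    have "continuous_on {x..b} (\<lambda>y. \<eta> * y)"
      by (intro continuous_intros)
    moreover have "lap_right (\<lambda>y. \<eta> * y) b x s = \<eta> * (s\<^sup>2 * integral {0..b - x} (\<lambda>t. exp (- s * t) * t))"
      using lap_right_cmult[of \<eta> "\<lambda>y. y" b x s] by (simp add: lap_right_ident)
    ultimately show ?thesis
      by (simp add: lap_right_add[OF Hx])
  qed
  have "((\<lambda>s. C / s) \<longlongrightarrow> 0) at_top"
    by real_asymp
  then have ev1: "eventually (\<lambda>s. C / s < \<eta> / 4) at_top"
    using \<eta> by (intro order_tendstoD(2)) auto
  have ev2: "eventually (\<lambda>s. 3 / 4 < s\<^sup>2 * integral {0..b - x} (\<lambda>t. exp (- s * t) * t)) at_top"
    using x cd by (intro order_tendstoD(1)[OF laplace_quotient_t_tendsto]) auto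
  have ev3: "eventually (\<lambda>s. - (\<eta> / 2) < lap_right H b x s) at_top"
    using R[of x "\<eta> / 2"] x cd \<eta> by auto
  have "eventually (\<lambda>s::real. False) at_top"
    using ev1 ev2 ev3 eventually_gt_at_top[of 0]
  proof eventually_elim
    case (elim s)
    have "\<eta> * (3 / 4) < \<eta> * (s\<^sup>2 * integral {0..b - x} (\<lambda>t. exp (- s * t) * t))"
      using elim(2) \<eta> by (intro mult_strict_left_mono) auto
    then show False
      using elim upper[of s] split[of s] by linarith
  qed
  then show False
    by simp
qed (use cd in auto)

lemma le_if_dini_right_nonneg:
  fixes H :: "real \<Rightarrow> real"
  assumes H: "continuous_on {a..b} H" and cd: "a \<le> c" "c \<le> d" "d \<le> b"
    and R: "\<And>x e. x \<in> {a..<b} \<Longrightarrow> e > 0 \<Longrightarrow> eventually (\<lambda>y. - e < (H y - H x) / (y - x)) (at x within {a..b})"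
  shows "H c \<le> H d"
proof (rule le_if_no_tilted_max[where H = H and c = c and d = d])
  show "continuous_on {c..d} H"
    using H by (rule continuous_on_subset) (use cd in auto)
  fix \<eta> x
  assume \<eta>: "\<eta> > 0" and x: "x \<in> {c..<d}" and max: "\<And>y. y \<in> {c..d} \<Longrightarrow> H y + \<eta> * y \<le> H x + \<eta> * x"
  obtain \<delta> where \<delta>: "\<delta> > 0" "\<And>y. y \<in> {a..b} \<Longrightarrow> y \<noteq> x \<Longrightarrow> dist y x < \<delta> \<Longrightarrow> - \<eta> < (H y - H x) / (y - x)"
    using R[of x \<eta>] x cd \<eta> unfolding eventually_at by auto
  define y where "y = x + min (\<delta> / 2) (d - x)"
  have y: "y \<in> {c..d}" "y \<in> {a..b}" "x < y" "dist y x < \<delta>"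
    using x cd \<delta> by (auto simp: y_def dist_real_def)
  have "H y - H x \<le> - \<eta> * (y - x)"
    using max[OF y(1)] by (simp add: algebra_simps)
  then have "(H y - H x) / (y - x) \<le> - \<eta>"
    using y(3) by (simp add: divide_le_eq)
  then show False
    using \<delta>(2)[OF y(2) _ y(4)] y(3) by auto
qed (use cd in auto)

lemma laplace_minor_le_major:
  assumes U: "laplace_major \<phi> a b U" and V: "laplace_minor \<phi> a b V"
    and cd: "a \<le> c" "c \<le> d" "d \<le> b"
  shows "V d - V c \<le> U d - U c"
proof (cases "a < b")
  case False
  then have "c = d"
    using cd by linarith
  then show ?thesis
    by simp
next
  case ab: True
  note U' = U[unfolded laplace_major_iff[OF ab]]
  note V' = V[unfolded laplace_minor_iff_major_uminus laplace_major_iff[OF ab]]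
  have "U c - V c \<le> U d - V d"
  proof (rule le_if_lap_right_nonneg[OF _ cd])
    show "continuous_on {a..b} (\<lambda>y. U y - V y)"
      using U' V' by (intro continuous_on_diff) (auto simp: continuous_on_uminus_iff)
    fix x e :: real
    assume x: "x \<in> {a..<b}" and e: "e > 0"
    have "continuous_on {x..b} U" "continuous_on {x..b} (\<lambda>y. - V y)"
      using U' V' x by (auto intro: continuous_on_subset)
    from lap_right_add[OF this]
    have split: "lap_right (\<lambda>y. U y - V y) b x s = lap_right U b x s + lap_right (\<lambda>y. - V y) b x s" for s
      by simp
    have "eventually (\<lambda>s. \<phi> x - e / 2 < lap_right U b x s) at_top"
      "eventually (\<lambda>s. - \<phi> x - e / 2 < lap_right (\<lambda>y. - V y) b x s) at_top"
      using U' V' x e by auto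
    then show "eventually (\<lambda>s. - e < lap_right (\<lambda>y. U y - V y) b x s) at_top"
      by eventually_elim (simp add: split)
  qed
  then show ?thesis
    by simp
qed

lemma perron_minor_le_major:
  assumes U: "perron_major \<phi> a b U" and V: "perron_minor \<phi> a b V"
    and cd: "a \<le> c" "c \<le> d" "d \<le> b"
  shows "V d - V c \<le> U d - U c"
proof -
  note U' = U[unfolded perron_major_iff]
  note V' = V[unfolded perron_minor_iff_major_uminus perron_major_iff]
  have "U c - V c \<le> U d - V d"
  proof (rule le_if_dini_right_nonneg[OF _ cd])
    show "continuous_on {a..b} (\<lambda>y. U y - V y)"
      using U' V' by (auto intro!: continuous_intros simp: continuous_on_uminus_iff)
    fix x e :: real
    assume x: "x \<in> {a..<b}" and e: "e > 0"
    have "eventually (\<lambda>y. \<phi> x - e / 2 < (U y - U x) / (y - x)) (at x within {a..b})"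
      "eventually (\<lambda>y. - \<phi> x - e / 2 < (- V y - - V x) / (y - x)) (at x within {a..b})"
      using U' V' x e by auto
    then show "eventually (\<lambda>y. - e < (U y - V y - (U x - V x)) / (y - x)) (at x within {a..b})"
    proof eventually_elim
      case (elim y)
      have "(U y - V y - (U x - V x)) / (y - x) = (U y - U x) / (y - x) + (- V y - - V x) / (y - x)"
        by (simp add: add_divide_distrib[symmetric] algebra_simps)
      then show ?case
        using elim by simp
    qed
  qed
  then show ?thesis
    by simp
qed

lemma INF_eq_if_squeezed:
  fixes \<Delta> :: "'a \<Rightarrow> real"
  assumes le: "\<And>U V. U \<in> A \<Longrightarrow> V \<in> B \<Longrightarrow> \<Delta> V \<le> \<Delta> U"
    and close: "\<And>e. e > 0 \<Longrightarrow> \<exists>U\<in>A. \<exists>V\<in>B. \<Delta> U \<le> T + e \<and> T - e \<le> \<Delta> V"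
  shows "(INF U\<in>A. ereal (\<Delta> U)) = ereal T"
proof (intro antisym INF_greatest)
  show "ereal T \<le> ereal (\<Delta> U)" if "U \<in> A" for U
  proof -
    have "T \<le> \<Delta> U + e" if "e > 0" for e
      using close[OF that] le[OF \<open>U \<in> A\<close>] by fastforce
    then show ?thesis
      using field_le_epsilon by auto
  qed
  show "(INF U\<in>A. ereal (\<Delta> U)) \<le> ereal T"
  proof (rule ereal_le_epsilon2)
    fix e :: real
    assume "e > 0"
    then obtain U where "U \<in> A" "\<Delta> U \<le> T + e"
      using close by blast
    then have "(INF U\<in>A. ereal (\<Delta> U)) \<le> ereal (T + e)"
      by (intro INF_lower2) auto
    then show "(INF U\<in>A. ereal (\<Delta> U)) \<le> ereal T + ereal e"
      by simp
  qed
qed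

lemma SUP_eq_if_squeezed:
  fixes \<Delta> :: "'a \<Rightarrow> real"
  assumes le: "\<And>U V. U \<in> A \<Longrightarrow> V \<in> B \<Longrightarrow> \<Delta> V \<le> \<Delta> U"
    and close: "\<And>e. e > 0 \<Longrightarrow> \<exists>U\<in>A. \<exists>V\<in>B. \<Delta> U \<le> T + e \<and> T - e \<le> \<Delta> V"
  shows "(SUP V\<in>B. ereal (\<Delta> V)) = ereal T"
proof -
  have "(INF V\<in>B. ereal (- \<Delta> V)) = ereal (- T)"
  proof (rule INF_eq_if_squeezed)
    show "- \<Delta> U \<le> - \<Delta> V" if "V \<in> B" "U \<in> A" for U V
      using le[OF that(2,1)] by simp
    show "\<exists>V\<in>B. \<exists>U\<in>A. - \<Delta> V \<le> - T + e \<and> - T - e \<le> - \<Delta> U" if "e > 0" for e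
      using close[OF that] by force
  qed
  then show ?thesis
    using ereal_SUP_uminus_eq[of "\<lambda>V. ereal (- \<Delta> V)" B] by simp
qed

lemma laplace_integrableI:
  assumes "a < b"
    and close: "\<And>e. e > 0 \<Longrightarrow> \<exists>U V. laplace_major \<phi> a b U \<and> laplace_minor \<phi> a b V \<and>
                  U b - U a \<le> T + e \<and> T - e \<le> V b - V a"
  shows "laplace_integrable \<phi> a b" "laplace_integral \<phi> a b = T"
proof -
  have le: "V b - V a \<le> U b - U a"
    if "U \<in> Collect (laplace_major \<phi> a b)" "V \<in> Collect (laplace_minor \<phi> a b)" for U V
    using laplace_minor_le_major[of \<phi> a b U V a b] that assms(1) by simp
  have cl: "\<exists>U\<in>Collect (laplace_major \<phi> a b). \<exists>V\<in>Collect (laplace_minor \<phi> a b).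
      U b - U a \<le> T + e \<and> T - e \<le> V b - V a" if "e > 0" for e
    using close[OF that] by blast
  note INF_eq_if_squeezed[OF le cl] SUP_eq_if_squeezed[OF le cl]
  then show "laplace_integrable \<phi> a b" "laplace_integral \<phi> a b = T"
    using assms(1) by (simp_all add: laplace_integrable_def laplace_integral_def)
qed

lemma perron_integrableI:
  assumes "a < b"
    and close: "\<And>e. e > 0 \<Longrightarrow> \<exists>U V. perron_major \<phi> a b U \<and> perron_minor \<phi> a b V \<and>
                  U b - U a \<le> T + e \<and> T - e \<le> V b - V a"
  shows "perron_integrable \<phi> a b" "perron_integral \<phi> a b = T"
proof -
  have le: "V b - V a \<le> U b - U a"
    if "U \<in> Collect (perron_major \<phi> a b)" "V \<in> Collect (perron_minor \<phi> a b)" for U V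
    using perron_minor_le_major[of \<phi> a b U V a b] that assms(1) by simp
  have cl: "\<exists>U\<in>Collect (perron_major \<phi> a b). \<exists>V\<in>Collect (perron_minor \<phi> a b).
      U b - U a \<le> T + e \<and> T - e \<le> V b - V a" if "e > 0" for e
    using close[OF that] by blast
  note INF_eq_if_squeezed[OF le cl] SUP_eq_if_squeezed[OF le cl]
  then show "perron_integrable \<phi> a b" "perron_integral \<phi> a b = T"
    using assms(1) by (simp_all add: perron_integrable_def perron_integral_def)
qed

lemma abs_integral_exp_mult_le:
  fixes h :: "real \<Rightarrow> real"
  assumes h: "continuous_on {u..v} h" and "0 \<le> s" "u \<le> v" and B: "\<And>t. t \<in> {u..v} \<Longrightarrow> \<bar>h t\<bar> \<le> B"
  shows "\<bar>integral {u..v} (\<lambda>t. exp (- s * t) * h t)\<bar> \<le> exp (- s * u) * B * (v - u)"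
proof -
  have "norm (integral {u..v} (\<lambda>t. exp (- s * t) * h t)) \<le> exp (- s * u) * B * (v - u)"
  proof (rule integral_bound)
    fix t
    assume t: "t \<in> {u..v}"
    have "exp (- s * t) * \<bar>h t\<bar> \<le> exp (- s * u) * B"
      using t assms B[of u] by (intro mult_mono) (auto simp: mult_left_mono)
    then show "norm (exp (- s * t) * h t) \<le> exp (- s * u) * B"
      by (simp add: abs_mult)
  qed (use assms in \<open>auto intro!: continuous_intros\<close>)
  then show ?thesis
    by simp
qed

text \<open>The right Laplace quotient at x integrates up to the right end of the interval; cutting the
  interval at y > x changes it only by an exponentially small amount.\<close>

lemma lap_right_tail_tendsto:
  fixes U :: "real \<Rightarrow> real"
  assumes U: "continuous_on {x..b} U" and xy: "x < y" "y \<le> b"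
  shows "((\<lambda>s. lap_right U b x s - lap_right U y x s) \<longlongrightarrow> 0) at_top"
proof -
  define h where "h t = U (x + t) - U x" for t
  have h: "continuous_on {0..b - x} h"
    unfolding h_def by (intro continuous_intros continuous_on_translate_Icc U)
  obtain B where B: "\<And>t. t \<in> {0..b - x} \<Longrightarrow> \<bar>h t\<bar> \<le> B"
    using compact_imp_bounded[OF compact_continuous_image[OF h compact_Icc]]
    unfolding bounded_iff by (metis image_eqI real_norm_def)
  have bound: "norm (lap_right U b x s - lap_right U y x s) \<le> B * (b - x) * (s\<^sup>2 * exp (- s * (y - x)))"
    if s: "s > 0" for s
  proof -
    have "integral {0..y - x} (\<lambda>t. exp (- s * t) * h t) + integral {y - x..b - x} (\<lambda>t. exp (- s * t) * h t)
        = integral {0..b - x} (\<lambda>t. exp (- s * t) * h t)"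
      using xy by (intro Henstock_Kurzweil_Integration.integral_combine integrable_continuous_interval
          continuous_intros h) auto
    then have diff: "lap_right U b x s - lap_right U y x s
        = s\<^sup>2 * integral {y - x..b - x} (\<lambda>t. exp (- s * t) * h t)"
      by (simp add: lap_right_def h_def flip: right_diff_distrib)
    have "\<bar>integral {y - x..b - x} (\<lambda>t. exp (- s * t) * h t)\<bar> \<le> exp (- s * (y - x)) * B * ((b - x) - (y - x))"
      by (rule abs_integral_exp_mult_le[OF continuous_on_subset[OF h]]) (use xy s B in auto)
    also have "\<dots> \<le> exp (- s * (y - x)) * B * (b - x)"
      using xy B[of 0] by (intro mult_left_mono) auto
    finally have "s\<^sup>2 * \<bar>integral {y - x..b - x} (\<lambda>t. exp (- s * t) * h t)\<bar>
        \<le> s\<^sup>2 * (exp (- s * (y - x)) * B * (b - x))"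
      by (rule mult_left_mono) simp
    then show ?thesis
      unfolding diff by (simp add: abs_mult mult_ac)
  qed
  have "eventually (\<lambda>s. norm (lap_right U b x s - lap_right U y x s)
      \<le> B * (b - x) * (s\<^sup>2 * exp (- s * (y - x)))) at_top"
    using eventually_gt_at_top[of 0] by eventually_elim (rule bound)
  moreover have "((\<lambda>s. B * (b - x) * (s\<^sup>2 * exp (- s * (y - x)))) \<longlongrightarrow> 0) at_top"
    using xy by real_asymp
  ultimately show ?thesis
    by (rule Lim_null_comparison)
qed

lemma laplace_major_restrict:
  assumes U: "laplace_major \<phi> a b U" and y: "a < y" "y \<le> b"
  shows "laplace_major \<phi> a y U"
proof -
  note U' = U[unfolded laplace_major_iff[OF less_le_trans[OF y]]]
  have "eventually (\<lambda>s. \<phi> x - e < lap_right U y x s) at_top" if x: "x \<in> {a..<y}" and e: "e > 0" for x e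
  proof -
    have "eventually (\<lambda>s. \<phi> x - e / 2 < lap_right U b x s) at_top"
      using U' x y e by auto
    moreover have "continuous_on {x..b} U"
      using continuous_on_subset[of "{a..b}" U "{x..b}"] U' x by auto
    then have "eventually (\<lambda>s. \<bar>lap_right U b x s - lap_right U y x s\<bar> < e / 2) at_top"
      using tendstoD[OF lap_right_tail_tendsto[of x b U y], of "e / 2"] x y e
      by (auto simp: dist_real_def)
    ultimately show ?thesis
      by eventually_elim linarith
  qed
  moreover have "continuous_on {a..y} U"
    using U' y by (auto intro: continuous_on_subset)
  ultimately show ?thesis
    using U' y unfolding laplace_major_iff[OF y(1)] by auto
qed

lemma laplace_minor_restrict:
  "laplace_minor \<phi> a b V \<Longrightarrow> a < y \<Longrightarrow> y \<le> b \<Longrightarrow> laplace_minor \<phi> a y V"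
  unfolding laplace_minor_iff_major_uminus by (rule laplace_major_restrict)

lemma laplace_integral_between:
  assumes U: "laplace_major \<phi> a b U" and V: "laplace_minor \<phi> a b V" and y: "y \<in> {a..b}"
  shows "V y - V a \<le> laplace_integral \<phi> a y \<and> laplace_integral \<phi> a y \<le> U y - U a"
proof (cases "y = a")
  case True
  then show ?thesis
    by (simp add: laplace_integral_def)
next
  case False
  then have y: "a < y" "y \<le> b"
    using y by auto
  define X where "X = (INF U\<in>{U. laplace_major \<phi> a y U}. ereal (U y - U a))"
  have "X \<le> ereal (U y - U a)"
    unfolding X_def using laplace_major_restrict[OF U y] by (intro INF_lower) auto
  moreover have "ereal (V y - V a) \<le> X"
    unfolding X_def using laplace_minor_le_major[OF _ laplace_minor_restrict[OF V y], of _ a y] y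
    by (intro INF_greatest) auto
  ultimately show ?thesis
    using y by (cases X) (auto simp: laplace_integral_def X_def)
qed

lemma lower_LD_add_const: "lower_LD (\<lambda>y. U y + k) a b x = lower_LD U a b x"
  by (simp add: lower_LD_def lap_right_def lap_left_def)

lemma laplace_major_add_const: "laplace_major \<phi> a b U \<Longrightarrow> laplace_major \<phi> a b (\<lambda>y. U y + k)"
  by (auto simp: laplace_major_def lower_LD_add_const intro: continuous_on_add continuous_on_const)

lemma laplace_minor_add_const: "laplace_minor \<phi> a b V \<Longrightarrow> laplace_minor \<phi> a b (\<lambda>y. V y + k)"
  using laplace_major_add_const[of "\<lambda>x. - \<phi> x" a b "\<lambda>x. - V x" "- k"]
  by (simp add: laplace_minor_iff_major_uminus)

lemma laplace_integrable_obtain_close: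
  assumes "laplace_integrable \<phi> a b" "\<eta> > 0"
  obtains U V where "laplace_major \<phi> a b U" "laplace_minor \<phi> a b V" "U a = 0" "V a = 0" "U b - V b < \<eta>"
proof -
  have "\<bar>INF U\<in>{U. laplace_major \<phi> a b U}. ereal (U b - U a)\<bar> \<noteq> \<infinity>"
    using assms(1) unfolding laplace_integrable_def by simp
  then obtain T where T: "(INF U\<in>{U. laplace_major \<phi> a b U}. ereal (U b - U a)) = ereal T"
    by (cases "INF U\<in>{U. laplace_major \<phi> a b U}. ereal (U b - U a)") auto
  then have T': "(SUP V\<in>{V. laplace_minor \<phi> a b V}. ereal (V b - V a)) = ereal T"
    using assms(1) unfolding laplace_integrable_def by simp
  have "(INF U\<in>{U. laplace_major \<phi> a b U}. ereal (U b - U a)) < ereal (T + \<eta> / 2)"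
    using T assms(2) by simp
  then obtain U where U: "laplace_major \<phi> a b U" "U b - U a < T + \<eta> / 2"
    by (auto simp: INF_less_iff)
  have "ereal (T - \<eta> / 2) < (SUP V\<in>{V. laplace_minor \<phi> a b V}. ereal (V b - V a))"
    using T' assms(2) by simp
  then obtain V where V: "laplace_minor \<phi> a b V" "T - \<eta> / 2 < V b - V a"
    by (auto simp: less_SUP_iff)
  show ?thesis
    using that[OF laplace_major_add_const[OF U(1), of "- U a"] laplace_minor_add_const[OF V(1), of "- V a"]] U V
    by simp
qed

lemma laplace_integrable_obtain_sandwich:
  assumes "laplace_integrable \<phi> a b" "\<eta> > 0"
  obtains U V where "laplace_major \<phi> a b U" "laplace_minor \<phi> a b V" "U a = 0" "V a = 0"
    "\<And>y. y \<in> {a..b} \<Longrightarrow> V y \<le> laplace_integral \<phi> a y \<and> laplace_integral \<phi> a y \<le> U y \<and> U y - V y < \<eta>"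
proof -
  obtain U V where UV: "laplace_major \<phi> a b U" "laplace_minor \<phi> a b V" "U a = 0" "V a = 0" "U b - V b < \<eta>"
    using laplace_integrable_obtain_close[OF assms] by blast
  show ?thesis
  proof (rule that[OF UV(1-4)])
    fix y
    assume y: "y \<in> {a..b}"
    show "V y \<le> laplace_integral \<phi> a y \<and> laplace_integral \<phi> a y \<le> U y \<and> U y - V y < \<eta>"
      using laplace_integral_between[OF UV(1,2) y] laplace_minor_le_major[OF UV(1,2), of y b] y UV(3-5)
      by auto
  qed
qed

lemma laplace_indefinite_integral_continuous:
  assumes "laplace_integrable \<phi> a b"
  shows "continuous_on {a..b} (\<lambda>x. laplace_integral \<phi> a x)"
  unfolding continuous_on_iff
proof (intro ballI allI impI)
  fix y e :: real
  assume y: "y \<in> {a..b}" and e: "e > 0"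
  obtain U V where UV: "laplace_major \<phi> a b U"
    "\<And>z. z \<in> {a..b} \<Longrightarrow> V z \<le> laplace_integral \<phi> a z \<and> laplace_integral \<phi> a z \<le> U z \<and> U z - V z < e / 2"
    using laplace_integrable_obtain_sandwich[OF assms, of "e / 2"] e by (metis half_gt_zero)
  have "continuous_on {a..b} U"
    using UV(1) by (simp add: laplace_major_def)
  then obtain \<delta> where \<delta>: "\<delta> > 0" "\<And>z. z \<in> {a..b} \<Longrightarrow> dist z y < \<delta> \<Longrightarrow> dist (U z) (U y) < e / 2"
    using y e unfolding continuous_on_iff by (metis half_gt_zero)
  show "\<exists>\<delta>>0. \<forall>z\<in>{a..b}. dist z y < \<delta> \<longrightarrow> dist (laplace_integral \<phi> a z) (laplace_integral \<phi> a y) < e"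
  proof (intro exI[of _ \<delta>] conjI ballI impI)
    fix z
    assume z: "z \<in> {a..b}" "dist z y < \<delta>"
    have "U z - U y < e / 2" "U y - U z < e / 2"
      using \<delta>(2)[OF z] unfolding dist_real_def abs_less_iff by linarith+
    then show "dist (laplace_integral \<phi> a z) (laplace_integral \<phi> a y) < e"
      using UV(2)[OF y] UV(2)[OF z(1)] by (auto simp: dist_real_def abs_less_iff)
  qed (rule \<delta>(1))
qed

lemma laplace_integral_cong:
  assumes "\<And>x. x \<in> {a..b} \<Longrightarrow> \<phi> x = \<psi> x"
  shows "laplace_integrable \<phi> a b = laplace_integrable \<psi> a b"
    and "laplace_integral \<phi> a b = laplace_integral \<psi> a b"
proof -
  have "laplace_major \<phi> a b = laplace_major \<psi> a b" "laplace_minor \<phi> a b = laplace_minor \<psi> a b"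
    using assms by (auto simp: fun_eq_iff laplace_major_def laplace_minor_def)
  then show "laplace_integrable \<phi> a b = laplace_integrable \<psi> a b"
    "laplace_integral \<phi> a b = laplace_integral \<psi> a b"
    by (simp_all add: laplace_integrable_def laplace_integral_def)
qed

lemma eventually_at_within_Icc_split:
  fixes x :: real
  assumes R: "x < b \<Longrightarrow> eventually P (at_right x)" and L: "a < x \<Longrightarrow> eventually P (at_left x)"
  shows "eventually P (at x within {a..b})"
proof -
  have "eventually (\<lambda>y. y \<noteq> x \<longrightarrow> y \<in> {x<..} \<longrightarrow> y \<in> {a..b} \<longrightarrow> P y) (nhds x)"
    using R by (cases "x < b") (auto simp: eventually_at_filter elim: eventually_mono)
  moreover have "eventually (\<lambda>y. y \<noteq> x \<longrightarrow> y \<in> {..<x} \<longrightarrow> y \<in> {a..b} \<longrightarrow> P y) (nhds x)"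
    using L by (cases "a < x") (auto simp: eventually_at_filter elim: eventually_mono)
  ultimately show ?thesis
    unfolding eventually_at_filter by eventually_elim (auto simp: neq_iff)
qed

lemma laplace_major_of_one_sided_derivs:
  assumes ab: "a < b" and M: "continuous_on {a..b} M"
    and R: "\<And>x. x \<in> {a..<b} \<Longrightarrow> \<exists>m\<ge>\<phi> x. ((\<lambda>t. (M (x + t) - M x) / t) \<longlongrightarrow> m) (at_right 0)"
    and L: "\<And>x. x \<in> {a<..b} \<Longrightarrow> \<exists>m\<ge>\<phi> x. ((\<lambda>t. (M x - M (x - t)) / t) \<longlongrightarrow> m) (at_right 0)"
  shows "laplace_major \<phi> a b M"
  unfolding laplace_major_iff[OF ab]
proof (intro conjI ballI allI impI M)
  fix x e :: real
  assume x: "x \<in> {a..<b}" and e: "e > 0"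
  obtain m where m: "\<phi> x \<le> m" "((\<lambda>t. (M (x + t) - M x) / t) \<longlongrightarrow> m) (at_right 0)"
    using R[OF x] by blast
  have "((\<lambda>s. lap_right M b x s) \<longlongrightarrow> m) at_top"
    using x m(2) by (intro lap_right_tendsto continuous_on_subset[OF M]) auto
  then show "eventually (\<lambda>s. \<phi> x - e < lap_right M b x s) at_top"
    using m(1) e by (intro order_tendstoD(1)) auto
next
  fix x e :: real
  assume x: "x \<in> {a<..b}" and e: "e > 0"
  obtain m where m: "\<phi> x \<le> m" "((\<lambda>t. (M x - M (x - t)) / t) \<longlongrightarrow> m) (at_right 0)"
    using L[OF x] by blast
  have "((\<lambda>s. lap_left M a x s) \<longlongrightarrow> m) at_top"
    using x m(2) by (intro lap_left_tendsto continuous_on_subset[OF M]) auto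
  then show "eventually (\<lambda>s. \<phi> x - e < lap_left M a x s) at_top"
    using m(1) e by (intro order_tendstoD(1)) auto
qed

lemma perron_major_of_one_sided_derivs:
  assumes M: "continuous_on {a..b} M"
    and R: "\<And>x. x \<in> {a..<b} \<Longrightarrow> \<exists>m\<ge>\<phi> x. ((\<lambda>t. (M (x + t) - M x) / t) \<longlongrightarrow> m) (at_right 0)"
    and L: "\<And>x. x \<in> {a<..b} \<Longrightarrow> \<exists>m\<ge>\<phi> x. ((\<lambda>t. (M x - M (x - t)) / t) \<longlongrightarrow> m) (at_right 0)"
  shows "perron_major \<phi> a b M"
  unfolding perron_major_iff
proof (intro conjI ballI allI impI M eventually_at_within_Icc_split)
  fix x e :: real
  assume x: "x \<in> {a..b}" and e: "e > 0"
  show "eventually (\<lambda>y. \<phi> x - e < (M y - M x) / (y - x)) (at_right x)" if xb: "x < b"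
  proof -
    obtain m where m: "\<phi> x \<le> m" "((\<lambda>t. (M (x + t) - M x) / t) \<longlongrightarrow> m) (at_right 0)"
      using R x xb by force
    have "eventually (\<lambda>t. \<phi> x - e < (M (x + t) - M x) / t) (at_right 0)"
      using m e by (intro order_tendstoD(1)) auto
    then show ?thesis
      unfolding eventually_at_right_to_0[of _ x] by (simp add: add.commute)
  qed
  show "eventually (\<lambda>y. \<phi> x - e < (M y - M x) / (y - x)) (at_left x)" if ax: "a < x"
  proof -
    obtain m where m: "\<phi> x \<le> m" "((\<lambda>t. (M x - M (x - t)) / t) \<longlongrightarrow> m) (at_right 0)"
      using L x ax by force
    have "eventually (\<lambda>t. \<phi> x - e < (M x - M (x - t)) / t) (at_right 0)"
      using m e by (intro order_tendstoD(1)) auto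
    moreover have "(M (x - t) - M x) / (x - t - x) = (M x - M (x - t)) / t" for t
      by (simp add: minus_divide_left)
    ultimately show ?thesis
      unfolding eventually_at_left_to_right eventually_at_right_to_0[of _ "- x"] by simp
  qed
qed

section \<open>Darboux integrability\<close>

definition grid_step :: "real \<Rightarrow> real \<Rightarrow> nat \<Rightarrow> real" where
  "grid_step a b n = (b - a) / real n"

definition grid_pt :: "real \<Rightarrow> real \<Rightarrow> nat \<Rightarrow> nat \<Rightarrow> real" where
  "grid_pt a b n i = a + real i * grid_step a b n"

definition grid_cell :: "real \<Rightarrow> real \<Rightarrow> nat \<Rightarrow> nat \<Rightarrow> real set" where
  "grid_cell a b n i = {grid_pt a b n i..grid_pt a b n (Suc i)}"

text \<open>The cap n - 1 puts b into the last cell.\<close>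

definition cell_index :: "real \<Rightarrow> real \<Rightarrow> nat \<Rightarrow> real \<Rightarrow> nat" where
  "cell_index a b n y = min (n - 1) (nat \<lfloor>(y - a) / grid_step a b n\<rfloor>)"

text \<open>The continuous function that vanishes at a and has slope c i on the i-th cell.\<close>

definition pw_linear :: "real \<Rightarrow> real \<Rightarrow> nat \<Rightarrow> (nat \<Rightarrow> real) \<Rightarrow> real \<Rightarrow> real" where
  "pw_linear a b n c y = (\<Sum>i<n. c i * max 0 (min (grid_step a b n) (y - grid_pt a b n i)))"

definition darboux_upper :: "(real \<Rightarrow> real) \<Rightarrow> real \<Rightarrow> real \<Rightarrow> nat \<Rightarrow> real" where
  "darboux_upper \<phi> a b n = (\<Sum>i<n. Sup (\<phi> ` grid_cell a b n i)) * grid_step a b n"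

definition darboux_lower :: "(real \<Rightarrow> real) \<Rightarrow> real \<Rightarrow> real \<Rightarrow> nat \<Rightarrow> real" where
  "darboux_lower \<phi> a b n = (\<Sum>i<n. Inf (\<phi> ` grid_cell a b n i)) * grid_step a b n"

context
  fixes a b :: real and n :: nat
  assumes ab: "a < b" and n: "n > 0"
begin

lemma grid_step_pos: "grid_step a b n > 0"
  using ab n by (simp add: grid_step_def)

lemma grid_step_div: "(b - a) / grid_step a b n = real n"
  using ab n by (simp add: grid_step_def)

lemma grid_pt_Suc: "grid_pt a b n (Suc i) = grid_pt a b n i + grid_step a b n"
  by (simp add: grid_pt_def algebra_simps)

lemma grid_pt_0: "grid_pt a b n 0 = a"
  by (simp add: grid_pt_def)

lemma grid_pt_n: "grid_pt a b n n = b"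
  using n by (simp add: grid_pt_def grid_step_def)

lemma grid_pt_mono: "i \<le> k \<Longrightarrow> grid_pt a b n i \<le> grid_pt a b n k"
  using grid_step_pos by (simp add: grid_pt_def mult_right_mono)

lemma grid_pt_gap: "i < k \<Longrightarrow> grid_pt a b n i + grid_step a b n \<le> grid_pt a b n k"
  using grid_pt_mono[of "Suc i" k] by (simp add: grid_pt_Suc)

lemma grid_cell_subset: "i < n \<Longrightarrow> grid_cell a b n i \<subseteq> {a..b}"
  using grid_pt_mono[of 0 i] grid_pt_mono[of "Suc i" n] by (auto simp: grid_cell_def grid_pt_0 grid_pt_n)

lemma grid_cell_diam: "y \<in> grid_cell a b n i \<Longrightarrow> z \<in> grid_cell a b n i \<Longrightarrow> \<bar>y - z\<bar> \<le> grid_step a b n"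
  by (auto simp: grid_cell_def grid_pt_Suc)

lemma grid_cell_right:
  assumes "a \<le> x" "x < b"
  obtains j where "j < n" "grid_pt a b n j \<le> x" "x < grid_pt a b n (Suc j)"
proof -
  define j where "j = nat \<lfloor>(x - a) / grid_step a b n\<rfloor>"
  have q: "real j \<le> (x - a) / grid_step a b n" "(x - a) / grid_step a b n < real j + 1"
    using assms grid_step_pos by (auto simp: j_def)
  moreover have "(x - a) / grid_step a b n < (b - a) / grid_step a b n"
    using assms grid_step_pos by (intro divide_strict_right_mono) auto
  ultimately have "j < n"
    using grid_step_div by linarith
  moreover have "real j * grid_step a b n \<le> x - a" "x - a < (real j + 1) * grid_step a b n"
    using q grid_step_pos by (simp_all add: le_divide_eq divide_less_eq)
  ultimately show ?thesis
    by (intro that[of j]) (auto simp: grid_pt_def algebra_simps)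
qed

lemma grid_cell_left:
  assumes "a < x" "x \<le> b"
  obtains k where "k < n" "grid_pt a b n k < x" "x \<le> grid_pt a b n (Suc k)"
proof -
  define q where "q = (x - a) / grid_step a b n"
  have q: "0 < q" "q \<le> real n"
    using assms ab n grid_step_pos by (auto simp: q_def grid_step_def divide_le_eq)
  define k where "k = nat (\<lceil>q\<rceil> - 1)"
  have "real k = real_of_int \<lceil>q\<rceil> - 1"
    using q by (simp add: k_def)
  then have k: "real k < q" "q \<le> real k + 1"
    using ceiling_correct[of q] by auto
  then have "k < n"
    using q by linarith
  moreover have "real k * grid_step a b n < x - a" "x - a \<le> (real k + 1) * grid_step a b n"
    using k grid_step_pos by (simp_all add: q_def less_divide_eq divide_le_eq)
  ultimately show ?thesis
    by (intro that[of k]) (auto simp: grid_pt_def algebra_simps)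
qed

lemma cell_index_eq:
  assumes "j < n" "grid_pt a b n j \<le> y" "y < grid_pt a b n (Suc j)"
  shows "cell_index a b n y = j"
proof -
  have "real j * grid_step a b n \<le> y - a" "y - a < (real j + 1) * grid_step a b n"
    using assms by (auto simp: grid_pt_def algebra_simps)
  then have "real j \<le> (y - a) / grid_step a b n" "(y - a) / grid_step a b n < real j + 1"
    using grid_step_pos by (auto simp: le_divide_eq divide_less_eq)
  then have "\<lfloor>(y - a) / grid_step a b n\<rfloor> = int j"
    by (intro floor_unique) auto
  then show ?thesis
    using assms(1) by (simp add: cell_index_def)
qed

lemma cell_index_mem:
  assumes "y \<in> {a..b}"
  shows "cell_index a b n y < n" "y \<in> grid_cell a b n (cell_index a b n y)"
proof -
  show "cell_index a b n y < n"
    using n by (simp add: cell_index_def)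
  show "y \<in> grid_cell a b n (cell_index a b n y)"
  proof (cases "y = b")
    case True
    have "cell_index a b n b = n - 1"
      by (simp add: cell_index_def grid_step_div)
    moreover have "grid_pt a b n (n - 1) \<le> b"
      using grid_pt_mono[of "n - 1" n] by (simp add: grid_pt_n)
    ultimately show ?thesis
      using True n by (simp add: grid_cell_def grid_pt_n)
  next
    case False
    then have "a \<le> y" "y < b"
      using assms by auto
    then obtain j where j: "j < n" "grid_pt a b n j \<le> y" "y < grid_pt a b n (Suc j)"
      by (rule grid_cell_right)
    then show ?thesis
      using cell_index_eq[OF j] by (simp add: grid_cell_def)
  qed
qed

lemma continuous_on_pw_linear: "continuous_on S (pw_linear a b n c)"
  unfolding pw_linear_def by (intro continuous_intros)

lemma pw_linear_uminus: "pw_linear a b n (\<lambda>i. - c i) y = - pw_linear a b n c y"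
  by (simp add: pw_linear_def sum_negf)

lemma pw_linear_increment: "pw_linear a b n c b - pw_linear a b n c a = (\<Sum>i<n. c i) * grid_step a b n"
proof -
  have "max 0 (min (grid_step a b n) (b - grid_pt a b n i)) = grid_step a b n" if "i < n" for i
    using grid_pt_gap[OF that] grid_step_pos by (simp add: grid_pt_n)
  moreover have "max 0 (min (grid_step a b n) (a - grid_pt a b n i)) = 0" for i
    using grid_pt_mono[of 0 i] by (simp add: grid_pt_0)
  ultimately show ?thesis
    by (simp add: pw_linear_def sum_distrib_right)
qed

lemma pw_linear_on_cell:
  assumes j: "j < n" and yz: "y \<in> grid_cell a b n j" "z \<in> grid_cell a b n j"
  shows "pw_linear a b n c z - pw_linear a b n c y = c j * (z - y)"
proof -
  have "c i * max 0 (min (grid_step a b n) (z - grid_pt a b n i))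
      - c i * max 0 (min (grid_step a b n) (y - grid_pt a b n i)) = (if i = j then c j * (z - y) else 0)"
    for i
  proof -
    consider "i < j" | "i = j" | "j < i"
      by linarith
    then show ?thesis
    proof cases
      case 1
      then show ?thesis
        using grid_pt_gap[of i j] yz by (auto simp: grid_cell_def)
    next
      case 2
      then show ?thesis
        using yz by (auto simp: grid_cell_def grid_pt_Suc algebra_simps)
    next
      case 3
      then show ?thesis
        using grid_pt_mono[of "Suc j" i] yz by (auto simp: grid_cell_def)
    qed
  qed
  then have "pw_linear a b n c z - pw_linear a b n c y = (\<Sum>i<n. if i = j then c j * (z - y) else 0)"
    by (simp add: pw_linear_def flip: sum_subtractf)
  also have "\<dots> = c j * (z - y)"
    using j by simp
  finally show ?thesis .
qed

lemma pw_linear_has_integral: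
  "((\<lambda>y. c (cell_index a b n y)) has_integral (\<Sum>i<n. c i) * grid_step a b n) {a..b}"
proof -
  have "((\<lambda>y. c (cell_index a b n y)) has_integral pw_linear a b n c b - pw_linear a b n c a) {a..b}"
  proof (rule fundamental_theorem_of_calculus_interior_strong[where S = "grid_pt a b n ` {..n}"])
    fix y
    assume y: "y \<in> {a<..<b} - grid_pt a b n ` {..n}"
    then have "a \<le> y" "y < b"
      by auto
    then obtain j where j0: "j < n" "grid_pt a b n j \<le> y" "y < grid_pt a b n (Suc j)"
      by (rule grid_cell_right)
    have "y \<noteq> grid_pt a b n j"
      using y j0(1) by auto
    with j0 have j: "j < n" "grid_pt a b n j < y" "y < grid_pt a b n (Suc j)"
      by auto
    have "((\<lambda>z. pw_linear a b n c y + c j * (z - y)) has_real_derivative c j) (at y)"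
      by (auto intro!: derivative_eq_intros)
    then have "(pw_linear a b n c has_real_derivative c j) (at y)"
    proof (rule has_field_derivative_transform_within_open)
      show "pw_linear a b n c y + c j * (z - y) = pw_linear a b n c z"
        if "z \<in> {grid_pt a b n j<..<grid_pt a b n (Suc j)}" for z
        using pw_linear_on_cell[OF j(1), of y z c] j that by (auto simp: grid_cell_def)
    qed (use j in auto)
    then show "(pw_linear a b n c has_vector_derivative c (cell_index a b n y)) (at y)"
      using cell_index_eq[OF j0] by (simp add: has_real_derivative_iff_has_vector_derivative)
  qed (use ab continuous_on_pw_linear in auto)
  then show ?thesis
    by (simp add: pw_linear_increment)
qed

lemma pw_linear_major:
  assumes le: "\<And>j y. j < n \<Longrightarrow> y \<in> grid_cell a b n j \<Longrightarrow> \<phi> y \<le> c j"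
  shows "laplace_major \<phi> a b (pw_linear a b n c)" "perron_major \<phi> a b (pw_linear a b n c)"
proof -
  have R: "\<exists>m\<ge>\<phi> x. ((\<lambda>t. (pw_linear a b n c (x + t) - pw_linear a b n c x) / t) \<longlongrightarrow> m) (at_right 0)"
    if "x \<in> {a..<b}" for x
  proof -
    from that have "a \<le> x" "x < b"
      by auto
    then obtain j where j: "j < n" "grid_pt a b n j \<le> x" "x < grid_pt a b n (Suc j)"
      by (rule grid_cell_right)
    have "eventually (\<lambda>t. c j = (pw_linear a b n c (x + t) - pw_linear a b n c x) / t) (at_right 0)"
      unfolding eventually_at_right_field
      using pw_linear_on_cell[OF j(1), of x _ c] j
      by (intro exI[of _ "grid_pt a b n (Suc j) - x"]) (auto simp: grid_cell_def)
    then show ?thesis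
      using le[OF j(1), of x] j by (intro exI[of _ "c j"]) (auto simp: grid_cell_def intro: tendsto_eventually
          Lim_transform_eventually[OF tendsto_const])
  qed
  have L: "\<exists>m\<ge>\<phi> x. ((\<lambda>t. (pw_linear a b n c x - pw_linear a b n c (x - t)) / t) \<longlongrightarrow> m) (at_right 0)"
    if "x \<in> {a<..b}" for x
  proof -
    from that have "a < x" "x \<le> b"
      by auto
    then obtain k where k: "k < n" "grid_pt a b n k < x" "x \<le> grid_pt a b n (Suc k)"
      by (rule grid_cell_left)
    have "eventually (\<lambda>t. c k = (pw_linear a b n c x - pw_linear a b n c (x - t)) / t) (at_right 0)"
      unfolding eventually_at_right_field
      using pw_linear_on_cell[OF k(1), of "_" x c] k
      by (intro exI[of _ "x - grid_pt a b n k"]) (auto simp: grid_cell_def)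
    then show ?thesis
      using le[OF k(1), of x] k by (intro exI[of _ "c k"]) (auto simp: grid_cell_def intro: 
          Lim_transform_eventually[OF tendsto_const])
  qed
  show "laplace_major \<phi> a b (pw_linear a b n c)"
    using ab R L by (intro laplace_major_of_one_sided_derivs continuous_on_pw_linear)
  show "perron_major \<phi> a b (pw_linear a b n c)"
    using R L by (intro perron_major_of_one_sided_derivs continuous_on_pw_linear)
qed

lemma pw_linear_minor:
  assumes "\<And>j y. j < n \<Longrightarrow> y \<in> grid_cell a b n j \<Longrightarrow> c j \<le> \<phi> y"
  shows "laplace_minor \<phi> a b (pw_linear a b n c)" "perron_minor \<phi> a b (pw_linear a b n c)"
proof -
  have eq: "(\<lambda>y. - pw_linear a b n c y) = pw_linear a b n (\<lambda>i. - c i)"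
    by (simp add: fun_eq_iff pw_linear_uminus)
  show "laplace_minor \<phi> a b (pw_linear a b n c)" "perron_minor \<phi> a b (pw_linear a b n c)"
    unfolding laplace_minor_iff_major_uminus perron_minor_iff_major_uminus eq
    using assms by (auto intro!: pw_linear_major)
qed

lemma darboux_upper_has_integral:
  "((\<lambda>y. Sup (\<phi> ` grid_cell a b n (cell_index a b n y))) has_integral darboux_upper \<phi> a b n) {a..b}"
  using pw_linear_has_integral[of "\<lambda>i. Sup (\<phi> ` grid_cell a b n i)"] by (simp add: darboux_upper_def)

lemma darboux_lower_has_integral:
  "((\<lambda>y. Inf (\<phi> ` grid_cell a b n (cell_index a b n y))) has_integral darboux_lower \<phi> a b n) {a..b}"
  using pw_linear_has_integral[of "\<lambda>i. Inf (\<phi> ` grid_cell a b n i)"] by (simp add: darboux_lower_def)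

context
  fixes \<phi> :: "real \<Rightarrow> real" and B :: real
  assumes bnd: "\<And>y. y \<in> {a..b} \<Longrightarrow> \<bar>\<phi> y\<bar> \<le> B"
begin

lemma cell_Inf_le_le_Sup:
  assumes "j < n" "y \<in> grid_cell a b n j"
  shows "Inf (\<phi> ` grid_cell a b n j) \<le> \<phi> y \<and> \<phi> y \<le> Sup (\<phi> ` grid_cell a b n j)"
proof -
  have "- B \<le> \<phi> z \<and> \<phi> z \<le> B" if "z \<in> grid_cell a b n j" for z
    using bnd[of z] grid_cell_subset[OF assms(1)] that by auto
  then have "bdd_below (\<phi> ` grid_cell a b n j)" "bdd_above (\<phi> ` grid_cell a b n j)"
    by (meson bdd_belowI2 bdd_aboveI2)+
  then show ?thesis
    using assms(2) by (auto intro: cInf_lower cSup_upper)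
qed

lemma darboux_majorant:
  "laplace_major \<phi> a b (pw_linear a b n (\<lambda>i. Sup (\<phi> ` grid_cell a b n i)))"
  "perron_major \<phi> a b (pw_linear a b n (\<lambda>i. Sup (\<phi> ` grid_cell a b n i)))"
  "pw_linear a b n (\<lambda>i. Sup (\<phi> ` grid_cell a b n i)) b - pw_linear a b n (\<lambda>i. Sup (\<phi> ` grid_cell a b n i)) a
     = darboux_upper \<phi> a b n"
  using cell_Inf_le_le_Sup
  by (blast intro: pw_linear_major)+ (simp add: pw_linear_increment darboux_upper_def)

lemma darboux_minorant:
  "laplace_minor \<phi> a b (pw_linear a b n (\<lambda>i. Inf (\<phi> ` grid_cell a b n i)))"
  "perron_minor \<phi> a b (pw_linear a b n (\<lambda>i. Inf (\<phi> ` grid_cell a b n i)))"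
  "pw_linear a b n (\<lambda>i. Inf (\<phi> ` grid_cell a b n i)) b - pw_linear a b n (\<lambda>i. Inf (\<phi> ` grid_cell a b n i)) a
     = darboux_lower \<phi> a b n"
  using cell_Inf_le_le_Sup
  by (blast intro: pw_linear_minor)+ (simp add: pw_linear_increment darboux_lower_def)

end

end

lemma darboux_integrable:
  fixes \<phi> :: "real \<Rightarrow> real"
  assumes ab: "a < b" and bnd: "\<And>y. y \<in> {a..b} \<Longrightarrow> \<bar>\<phi> y\<bar> \<le> B"
    and gap: "\<And>e. e > 0 \<Longrightarrow> \<exists>n>0. darboux_upper \<phi> a b n - darboux_lower \<phi> a b n < e"
  shows "\<phi> integrable_on {a..b}"
    and "laplace_integrable \<phi> a b" "laplace_integral \<phi> a b = integral {a..b} \<phi>"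
    and "perron_integrable \<phi> a b" "perron_integral \<phi> a b = integral {a..b} \<phi>"
proof -
  note upper = darboux_upper_has_integral[OF ab] and lower = darboux_lower_has_integral[OF ab]
  have step: "Inf (\<phi> ` grid_cell a b n (cell_index a b n y)) \<le> \<phi> y \<and> \<phi> y \<le> Sup (\<phi> ` grid_cell a b n (cell_index a b n y))"
    if "n > 0" "y \<in> {a..b}" for n y
    using cell_Inf_le_le_Sup[of a b n \<phi> B, OF ab that(1) bnd cell_index_mem[OF ab that]] by blast
  show int: "\<phi> integrable_on {a..b}"
    unfolding box_real(2)[symmetric]
  proof (rule integrable_straddle_interval)
    fix e :: real
    assume "e > 0"
    then obtain n where n: "n > 0" "darboux_upper \<phi> a b n - darboux_lower \<phi> a b n < e"
      using gap by blast
    have "darboux_lower \<phi> a b n \<le> darboux_upper \<phi> a b n"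
      using has_integral_le[OF lower[OF n(1)] upper[OF n(1)]] step[OF n(1)] by force
    then have "\<bar>darboux_lower \<phi> a b n - darboux_upper \<phi> a b n\<bar> < e"
      using n(2) by simp
    then show "\<exists>g h i j. (g has_integral i) (cbox a b) \<and> (h has_integral j) (cbox a b) \<and> \<bar>i - j\<bar> < e \<and>
        (\<forall>x\<in>cbox a b. g x \<le> \<phi> x \<and> \<phi> x \<le> h x)"
      using lower[OF n(1)] upper[OF n(1)] step[OF n(1)] unfolding box_real(2) by blast
  qed
  have between: "darboux_lower \<phi> a b n \<le> integral {a..b} \<phi> \<and> integral {a..b} \<phi> \<le> darboux_upper \<phi> a b n"
    if "n > 0" for n
    using has_integral_le[OF lower[OF that] integrable_integral[OF int]]
      has_integral_le[OF integrable_integral[OF int] upper[OF that]] step[OF that] by auto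
  have close: "\<exists>U V. laplace_major \<phi> a b U \<and> laplace_minor \<phi> a b V \<and> perron_major \<phi> a b U \<and>
      perron_minor \<phi> a b V \<and> U b - U a \<le> integral {a..b} \<phi> + e \<and> integral {a..b} \<phi> - e \<le> V b - V a"
    if "e > 0" for e
  proof -
    obtain n where n: "n > 0" "darboux_upper \<phi> a b n - darboux_lower \<phi> a b n < e"
      using gap \<open>e > 0\<close> by blast
    show ?thesis
      using darboux_majorant[of a b n \<phi> B, OF ab n(1) bnd] darboux_minorant[of a b n \<phi> B, OF ab n(1) bnd]
        between[OF n(1)] n(2)
      by (intro exI conjI) (assumption | linarith)+
  qed
  show "laplace_integrable \<phi> a b" "laplace_integral \<phi> a b = integral {a..b} \<phi>"
    using close by (intro laplace_integrableI[OF ab]; blast)+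
  show "perron_integrable \<phi> a b" "perron_integral \<phi> a b = integral {a..b} \<phi>"
    using close by (intro perron_integrableI[OF ab]; blast)+
qed

section \<open>Functions of bounded variation\<close>

lemma mono_on_has_right_limit:
  fixes P :: "real \<Rightarrow> real"
  assumes P: "mono_on {a..b} P" and x: "a \<le> x" "x < b"
  shows "\<exists>L. (P \<longlongrightarrow> L) (at_right x)"
proof -
  have "at x within ({x<..} \<inter> {a..b}) = at_right x"
    by (rule at_within_nhd[of _ "{..<b}"]) (use x in auto)
  moreover have "(P \<longlongrightarrow> Inf (P ` ({x<..} \<inter> {a..b}))) (at x within ({x<..} \<inter> {a..b}))"
    by (rule Lim_right_bound[where K = "P x"]) (use x in \<open>auto intro: mono_onD[OF P]\<close>)
  ultimately show ?thesis
    by auto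
qed

lemma mono_on_has_left_limit:
  fixes P :: "real \<Rightarrow> real"
  assumes P: "mono_on {a..b} P" and x: "a < x" "x \<le> b"
  shows "\<exists>L. (P \<longlongrightarrow> L) (at_left x)"
proof -
  have "at x within ({..<x} \<inter> {a..b}) = at_left x"
    by (rule at_within_nhd[of _ "{a<..}"]) (use x in auto)
  moreover have "(P \<longlongrightarrow> Sup (P ` ({..<x} \<inter> {a..b}))) (at x within ({..<x} \<inter> {a..b}))"
    by (rule Lim_left_bound[where K = "P x"]) (use x in \<open>auto intro: mono_onD[OF P]\<close>)
  ultimately show ?thesis
    by auto
qed

definition var_sum :: "(real \<Rightarrow> real) \<Rightarrow> real list \<Rightarrow> real" where
  "var_sum g xs = (\<Sum>i<length xs - 1. \<bar>g (xs ! Suc i) - g (xs ! i)\<bar>)"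

definition variation :: "(real \<Rightarrow> real) \<Rightarrow> real \<Rightarrow> real \<Rightarrow> real" where
  "variation g a y = Sup (var_sum g ` {xs. sorted xs \<and> set xs \<subseteq> {a..y}})"

lemma var_sum_snoc:
  "var_sum g (xs @ [u]) = var_sum g xs + (if xs = [] then 0 else \<bar>g u - g (last xs)\<bar>)"
proof (cases xs rule: rev_cases)
  case (snoc ys y)
  have "var_sum g (ys @ [y, u])
      = (\<Sum>i<length ys. \<bar>g ((ys @ [y, u]) ! Suc i) - g ((ys @ [y, u]) ! i)\<bar>) + \<bar>g u - g y\<bar>"
    by (simp add: var_sum_def nth_append)
  also have "(\<Sum>i<length ys. \<bar>g ((ys @ [y, u]) ! Suc i) - g ((ys @ [y, u]) ! i)\<bar>) = var_sum g (ys @ [y])"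
    by (auto simp: var_sum_def nth_append intro!: sum.cong)
  finally show ?thesis
    using snoc by simp
qed (simp add: var_sum_def)

lemma bounded_variation_on_subinterval:
  assumes "bounded_variation_on g a b" "c \<le> b"
  shows "bounded_variation_on g a c"
proof -
  have "{a..c} \<subseteq> {a..b}"
    using assms(2) by auto
  then show ?thesis
    using assms(1) unfolding bounded_variation_on_def by (meson order_trans)
qed

context
  fixes g :: "real \<Rightarrow> real" and a b :: real
  assumes bv: "bounded_variation_on g a b"
begin

lemma variation_ge:
  assumes "y \<le> b" "sorted xs" "set xs \<subseteq> {a..y}"
  shows "var_sum g xs \<le> variation g a y"
proof -
  obtain M where "\<And>xs. sorted xs \<Longrightarrow> set xs \<subseteq> {a..b} \<Longrightarrow> var_sum g xs \<le> M"
    using bv unfolding bounded_variation_on_def var_sum_def by blast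
  then have "bdd_above (var_sum g ` {xs. sorted xs \<and> set xs \<subseteq> {a..y}})"
    using assms(1) by (intro bdd_aboveI2[of _ _ M]) force
  then show ?thesis
    unfolding variation_def using assms(2,3) by (intro cSUP_upper) auto
qed

lemma variation_nonneg: "y \<le> b \<Longrightarrow> 0 \<le> variation g a y"
  using variation_ge[of y "[]"] by (simp add: var_sum_def)

lemma variation_add_jump:
  assumes "a \<le> y" "y \<le> z" "z \<le> b"
  shows "variation g a y + \<bar>g z - g y\<bar> \<le> variation g a z"
proof -
  have "var_sum g xs \<le> variation g a z - \<bar>g z - g y\<bar>" if xs: "sorted xs" "set xs \<subseteq> {a..y}" for xs
  proof -
    have "var_sum g xs \<le> var_sum g (xs @ [y])"
      by (simp add: var_sum_snoc)
    also have "\<dots> + \<bar>g z - g y\<bar> = var_sum g (xs @ [y] @ [z])"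
      using var_sum_snoc[of g "xs @ [y]" z] by simp
    also have "\<dots> \<le> variation g a z"
      using xs assms by (intro variation_ge) (auto simp: sorted_append)
    finally show ?thesis
      by simp
  qed
  then have "variation g a y \<le> variation g a z - \<bar>g z - g y\<bar>"
    unfolding variation_def[of g a y] by (intro cSUP_least) (auto intro: exI[of _ "[]"])
  then show ?thesis
    by simp
qed

lemma mono_on_variation: "mono_on {a..b} (variation g a)"
  using variation_add_jump by (intro mono_onI) force

lemma mono_on_variation_minus: "mono_on {a..b} (\<lambda>y. variation g a y - g y)"
  using variation_add_jump by (intro mono_onI) (smt (verit, best) atLeastAtMost_iff)

lemma bv_bounded: "y \<in> {a..b} \<Longrightarrow> \<bar>g y\<bar> \<le> \<bar>g a\<bar> + variation g a b"
  using variation_add_jump[of a y] variation_add_jump[of y b] variation_nonneg[of a] by force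

lemma bv_has_right_limit:
  assumes "a \<le> x" "x < b"
  shows "\<exists>L. (g \<longlongrightarrow> L) (at_right x)"
proof -
  obtain L1 L2 where "(variation g a \<longlongrightarrow> L1) (at_right x)" "((\<lambda>y. variation g a y - g y) \<longlongrightarrow> L2) (at_right x)"
    using mono_on_has_right_limit[OF mono_on_variation assms] mono_on_has_right_limit[OF mono_on_variation_minus assms]
    by blast
  from tendsto_diff[OF this] show ?thesis
    by auto
qed

lemma bv_has_left_limit:
  assumes "a < x" "x \<le> b"
  shows "\<exists>L. (g \<longlongrightarrow> L) (at_left x)"
proof -
  obtain L1 L2 where "(variation g a \<longlongrightarrow> L1) (at_left x)" "((\<lambda>y. variation g a y - g y) \<longlongrightarrow> L2) (at_left x)"
    using mono_on_has_left_limit[OF mono_on_variation assms] mono_on_has_left_limit[OF mono_on_variation_minus assms]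
    by blast
  from tendsto_diff[OF this] show ?thesis
    by auto
qed

end

lemma cSup_minus_cInf_le:
  fixes \<phi> :: "'a \<Rightarrow> real"
  assumes "S \<noteq> {}" and D: "\<And>y z. y \<in> S \<Longrightarrow> z \<in> S \<Longrightarrow> \<phi> y - \<phi> z \<le> D"
  shows "Sup (\<phi> ` S) - Inf (\<phi> ` S) \<le> D"
proof -
  have "Sup (\<phi> ` S) \<le> \<phi> z + D" if "z \<in> S" for z
    using D[OF _ that] \<open>S \<noteq> {}\<close> by (intro cSup_least) (auto simp: algebra_simps)
  then have "Sup (\<phi> ` S) - D \<le> \<phi> z" if "z \<in> S" for z
    using that by force
  then have "Sup (\<phi> ` S) - D \<le> Inf (\<phi> ` S)"
    using \<open>S \<noteq> {}\<close> by (intro cInf_greatest) auto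
  then show ?thesis
    by simp
qed

lemma oscillation_mult_bv_le:
  fixes \<Phi> g :: "real \<Rightarrow> real"
  assumes g: "bounded_variation_on g a b" and uv: "a \<le> u" "u \<le> v" "v \<le> b"
    and B\<Phi>: "\<And>y. y \<in> {a..b} \<Longrightarrow> \<bar>\<Phi> y\<bar> \<le> B\<Phi>" and Bg: "\<And>y. y \<in> {a..b} \<Longrightarrow> \<bar>g y\<bar> \<le> Bg"
    and \<omega>: "\<And>y z. y \<in> {u..v} \<Longrightarrow> z \<in> {u..v} \<Longrightarrow> \<bar>\<Phi> y - \<Phi> z\<bar> \<le> \<omega>"
  shows "Sup ((\<lambda>y. \<Phi> y * g y) ` {u..v}) - Inf ((\<lambda>y. \<Phi> y * g y) ` {u..v})
      \<le> B\<Phi> * (variation g a v - variation g a u) + Bg * \<omega>"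
proof (rule cSup_minus_cInf_le)
  show "{u..v} \<noteq> {}"
    using uv by auto
  fix y z
  assume yz: "y \<in> {u..v}" "z \<in> {u..v}"
  then have yz': "y \<in> {a..b}" "z \<in> {a..b}"
    using uv by auto
  have "\<bar>g (max y z) - g (min y z)\<bar> \<le> variation g a (max y z) - variation g a (min y z)"
    using variation_add_jump[OF g, of "min y z" "max y z"] yz' by (auto simp: min_def max_def)
  moreover have "variation g a (max y z) \<le> variation g a v" "variation g a u \<le> variation g a (min y z)"
    using yz uv by (auto intro!: mono_onD[OF mono_on_variation[OF g]])
  moreover have "\<bar>g y - g z\<bar> = \<bar>g (max y z) - g (min y z)\<bar>"
    by (cases "y \<le> z") (auto simp: max_def min_def intro: abs_minus_commute)
  ultimately have "\<bar>g y - g z\<bar> \<le> variation g a v - variation g a u"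
    by linarith
  then have "\<bar>\<Phi> y\<bar> * \<bar>g y - g z\<bar> \<le> B\<Phi> * (variation g a v - variation g a u)"
    using B\<Phi>[OF yz'(1)] by (intro mult_mono) auto
  then have 1: "\<Phi> y * (g y - g z) \<le> B\<Phi> * (variation g a v - variation g a u)"
    using abs_ge_self[of "\<Phi> y * (g y - g z)"] by (simp add: abs_mult)
  have "\<bar>g z\<bar> * \<bar>\<Phi> y - \<Phi> z\<bar> \<le> Bg * \<omega>"
    using Bg[OF yz'(2)] \<omega>[OF yz] by (intro mult_mono) auto
  then have 2: "g z * (\<Phi> y - \<Phi> z) \<le> Bg * \<omega>"
    using abs_ge_self[of "g z * (\<Phi> y - \<Phi> z)"] by (simp add: abs_mult)
  have "\<Phi> y * g y - \<Phi> z * g z = \<Phi> y * (g y - g z) + g z * (\<Phi> y - \<Phi> z)"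
    by (simp add: algebra_simps)
  with 1 2 show "\<Phi> y * g y - \<Phi> z * g z \<le> B\<Phi> * (variation g a v - variation g a u) + Bg * \<omega>"
    by linarith
qed

lemma darboux_gap_mult_bv_le:
  fixes \<Phi> g :: "real \<Rightarrow> real"
  assumes ab: "a < b" and n: "n > 0" and g: "bounded_variation_on g a b"
    and B\<Phi>: "\<And>y. y \<in> {a..b} \<Longrightarrow> \<bar>\<Phi> y\<bar> \<le> B\<Phi>" and Bg: "\<And>y. y \<in> {a..b} \<Longrightarrow> \<bar>g y\<bar> \<le> Bg"
    and \<omega>: "\<And>y z. y \<in> {a..b} \<Longrightarrow> z \<in> {a..b} \<Longrightarrow> \<bar>y - z\<bar> \<le> grid_step a b n \<Longrightarrow> \<bar>\<Phi> y - \<Phi> z\<bar> \<le> \<omega>"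
  shows "darboux_upper (\<lambda>y. \<Phi> y * g y) a b n - darboux_lower (\<lambda>y. \<Phi> y * g y) a b n
      \<le> B\<Phi> * variation g a b * grid_step a b n + Bg * \<omega> * (b - a)"
proof -
  define P where "P i = variation g a (grid_pt a b n i)" for i
  have B\<Phi>0: "B\<Phi> \<ge> 0"
    using B\<Phi>[of a] ab by auto
  have "Sup ((\<lambda>y. \<Phi> y * g y) ` grid_cell a b n i) - Inf ((\<lambda>y. \<Phi> y * g y) ` grid_cell a b n i)
      \<le> B\<Phi> * (P (Suc i) - P i) + Bg * \<omega>" if i: "i < n" for i
    unfolding grid_cell_def P_def
    using grid_cell_subset[OF ab n i] grid_pt_mono[OF ab n, of i "Suc i"] grid_cell_diam[OF ab n]
    by (intro oscillation_mult_bv_le[OF g _ _ _ B\<Phi> Bg] \<omega>) (auto simp: grid_cell_def)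
  then have "(\<Sum>i<n. Sup ((\<lambda>y. \<Phi> y * g y) ` grid_cell a b n i) - Inf ((\<lambda>y. \<Phi> y * g y) ` grid_cell a b n i))
      \<le> (\<Sum>i<n. B\<Phi> * (P (Suc i) - P i) + Bg * \<omega>)"
    by (intro sum_mono) auto
  also have "\<dots> = B\<Phi> * (P n - P 0) + real n * (Bg * \<omega>)"
    by (simp add: sum.distrib flip: sum_distrib_left sum_lessThan_telescope)
  also have "\<dots> \<le> B\<Phi> * variation g a b + real n * (Bg * \<omega>)"
    using variation_nonneg[OF g, of a] ab B\<Phi>0
    by (simp add: P_def grid_pt_0[OF ab n] grid_pt_n[OF ab n] mult_left_mono)
  finally have "darboux_upper (\<lambda>y. \<Phi> y * g y) a b n - darboux_lower (\<lambda>y. \<Phi> y * g y) a b n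
      \<le> (B\<Phi> * variation g a b + real n * (Bg * \<omega>)) * grid_step a b n"
    using mult_right_mono[OF _ less_imp_le[OF grid_step_pos[OF ab n]]]
    by (simp add: darboux_upper_def darboux_lower_def sum_subtractf left_diff_distrib[symmetric])
  also have "\<dots> = B\<Phi> * variation g a b * grid_step a b n + Bg * \<omega> * (b - a)"
    using n by (simp add: grid_step_def field_simps)
  finally show ?thesis .
qed

lemma darboux_gap_cont_mult_bv:
  fixes \<Phi> g :: "real \<Rightarrow> real"
  assumes ab: "a < b" and \<Phi>: "continuous_on {a..b} \<Phi>" and g: "bounded_variation_on g a b" and e: "e > 0"
  shows "\<exists>n>0. darboux_upper (\<lambda>y. \<Phi> y * g y) a b n - darboux_lower (\<lambda>y. \<Phi> y * g y) a b n < e"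
proof -
  obtain B\<Phi> where B\<Phi>: "\<And>y. y \<in> {a..b} \<Longrightarrow> \<bar>\<Phi> y\<bar> \<le> B\<Phi>"
    using compact_imp_bounded[OF compact_continuous_image[OF \<Phi> compact_Icc]] unfolding bounded_iff
    by (metis image_eqI real_norm_def)
  define Bg where "Bg = \<bar>g a\<bar> + variation g a b"
  have Bg: "\<And>y. y \<in> {a..b} \<Longrightarrow> \<bar>g y\<bar> \<le> Bg" "Bg \<ge> 0"
    using bv_bounded[OF g] variation_nonneg[OF g, of b] by (auto simp: Bg_def)
  define \<omega> where "\<omega> = e / (2 * (Bg + 1) * (b - a))"
  have \<omega>: "\<omega> > 0" "\<omega> * (2 * (Bg + 1) * (b - a)) = e"
    using e ab Bg(2) by (simp_all add: \<omega>_def)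
  then have "e = 2 * (Bg * \<omega> * (b - a)) + 2 * (\<omega> * (b - a))"
    by (simp add: algebra_simps)
  moreover have "\<omega> * (b - a) > 0"
    using \<omega>(1) ab by simp
  ultimately have \<omega>': "Bg * \<omega> * (b - a) < e / 2"
    by linarith
  obtain \<delta> where \<delta>: "\<delta> > 0" "\<And>y z. y \<in> {a..b} \<Longrightarrow> z \<in> {a..b} \<Longrightarrow> dist y z < \<delta> \<Longrightarrow> dist (\<Phi> y) (\<Phi> z) < \<omega>"
    using compact_uniformly_continuous[OF \<Phi> compact_Icc] \<omega>(1) unfolding uniformly_continuous_on_def by metis
  obtain n1 n2 :: nat where "(b - a) / \<delta> < n1" "2 * B\<Phi> * variation g a b * (b - a) / e < n2"
    using reals_Archimedean2 by metis
  then obtain n :: nat where n: "n > 0" "(b - a) / \<delta> < n" "2 * B\<Phi> * variation g a b * (b - a) / e < n"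
    by (intro that[of "n1 + n2 + 1"]) auto
  have h: "grid_step a b n < \<delta>" "B\<Phi> * variation g a b * grid_step a b n < e / 2"
    using n \<delta>(1) e ab by (auto simp: grid_step_def field_simps)
  have "\<bar>\<Phi> y - \<Phi> z\<bar> \<le> \<omega>" if "y \<in> {a..b}" "z \<in> {a..b}" "\<bar>y - z\<bar> \<le> grid_step a b n" for y z
    using \<delta>(2)[OF that(1,2)] that(3) h(1) by (simp add: dist_real_def)
  from darboux_gap_mult_bv_le[OF ab n(1) g B\<Phi> Bg(1) this]
  show ?thesis
    using h(2) \<omega>' n(1) by fastforce
qed

lemma cont_mult_bv_integrable:
  fixes \<Phi> g :: "real \<Rightarrow> real"
  assumes ab: "a < b" and \<Phi>: "continuous_on {a..b} \<Phi>" and g: "bounded_variation_on g a b"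
  shows "(\<lambda>y. \<Phi> y * g y) integrable_on {a..b}"
    and "laplace_integral (\<lambda>y. \<Phi> y * g y) a b = integral {a..b} (\<lambda>y. \<Phi> y * g y)"
    and "perron_integrable (\<lambda>y. \<Phi> y * g y) a b"
    and "perron_integral (\<lambda>y. \<Phi> y * g y) a b = integral {a..b} (\<lambda>y. \<Phi> y * g y)"
proof -
  obtain B\<Phi> where B\<Phi>: "\<And>y. y \<in> {a..b} \<Longrightarrow> \<bar>\<Phi> y\<bar> \<le> B\<Phi>"
    using compact_imp_bounded[OF compact_continuous_image[OF \<Phi> compact_Icc]] unfolding bounded_iff
    by (metis image_eqI real_norm_def)
  have "\<bar>\<Phi> y * g y\<bar> \<le> B\<Phi> * (\<bar>g a\<bar> + variation g a b)" if "y \<in> {a..b}" for y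
    unfolding abs_mult using B\<Phi>[OF that] bv_bounded[OF g that] by (intro mult_mono) auto
  note D = darboux_integrable[OF ab this darboux_gap_cont_mult_bv[OF ab \<Phi> g]]
  show "(\<lambda>y. \<Phi> y * g y) integrable_on {a..b}"
    "laplace_integral (\<lambda>y. \<Phi> y * g y) a b = integral {a..b} (\<lambda>y. \<Phi> y * g y)"
    "perron_integrable (\<lambda>y. \<Phi> y * g y) a b"
    "perron_integral (\<lambda>y. \<Phi> y * g y) a b = integral {a..b} (\<lambda>y. \<Phi> y * g y)"
    using D by auto
qed

section \<open>Products with indefinite integrals\<close>

lemma integral_near_const:
  fixes \<psi> :: "real \<Rightarrow> real"
  assumes \<psi>: "\<psi> integrable_on {u..v}" and "u \<le> v" "0 \<le> e"
    and near: "\<And>y. y \<in> {u<..<v} \<Longrightarrow> \<bar>\<psi> y - L\<bar> \<le> e"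
  shows "\<bar>integral {u..v} \<psi> - L * (v - u)\<bar> \<le> e * (v - u)"
proof -
  have "((\<lambda>y. \<psi> y - L) has_integral (integral {u..v} \<psi> - L * (v - u))) (cbox u v)"
    using has_integral_diff[OF integrable_integral[OF \<psi>] has_integral_const_real[of L u v]] \<open>u \<le> v\<close>
    by (simp add: mult.commute)
  from has_integral_bound_spike_finite[OF \<open>0 \<le> e\<close> _ this, of "{u, v}"] near \<open>u \<le> v\<close>
  show ?thesis
    by force
qed

lemma integral_right_quotient_tendsto:
  fixes \<psi> :: "real \<Rightarrow> real"
  assumes \<psi>: "\<psi> integrable_on {a..b}" and x: "a \<le> x" "x < b" and lim: "(\<psi> \<longlongrightarrow> L) (at_right x)"
  shows "((\<lambda>t. (integral {a..x + t} \<psi> - integral {a..x} \<psi>) / t) \<longlongrightarrow> L) (at_right 0)"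
proof (rule tendstoI)
  fix e :: real
  assume e: "e > 0"
  obtain x' where x': "x' > x" "\<And>y. x < y \<Longrightarrow> y < x' \<Longrightarrow> dist (\<psi> y) L < e / 2"
    using tendstoD[OF lim, of "e / 2"] e unfolding eventually_at_right_field by auto
  show "eventually (\<lambda>t. dist ((integral {a..x + t} \<psi> - integral {a..x} \<psi>) / t) L < e) (at_right 0)"
    unfolding eventually_at_right_field
  proof (intro exI[of _ "min (x' - x) (b - x)"] conjI allI impI)
    fix t :: real
    assume t: "0 < t" "t < min (x' - x) (b - x)"
    have "integral {a..x} \<psi> + integral {x..x + t} \<psi> = integral {a..x + t} \<psi>"
      using x t integrable_on_subinterval[OF \<psi>, of a "x + t"]
      by (intro Henstock_Kurzweil_Integration.integral_combine) auto
    then have "(integral {a..x + t} \<psi> - integral {a..x} \<psi>) / t - L = (integral {x..x + t} \<psi> - L * t) / t"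
      using t by (simp add: field_simps)
    moreover have "\<bar>integral {x..x + t} \<psi> - L * (x + t - x)\<bar> \<le> e / 2 * (x + t - x)"
    proof (rule integral_near_const)
      show "\<psi> integrable_on {x..x + t}"
        by (rule integrable_on_subinterval[OF \<psi>]) (use x t in auto)
      show "\<bar>\<psi> y - L\<bar> \<le> e / 2" if "y \<in> {x<..<x + t}" for y
        using x'(2)[of y] that t by (simp add: dist_real_def)
    qed (use t e in auto)
    then have "\<bar>integral {x..x + t} \<psi> - L * t\<bar> < e * t"
      using mult_pos_pos[OF e t(1)] by simp
    ultimately show "dist ((integral {a..x + t} \<psi> - integral {a..x} \<psi>) / t) L < e"
      using t by (simp add: dist_real_def abs_divide divide_less_eq)
  qed (use x' x in auto)
qed

lemma integral_left_quotient_tendsto: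
  fixes \<psi> :: "real \<Rightarrow> real"
  assumes \<psi>: "\<psi> integrable_on {a..b}" and x: "a < x" "x \<le> b" and lim: "(\<psi> \<longlongrightarrow> L) (at_left x)"
  shows "((\<lambda>t. (integral {a..x} \<psi> - integral {a..x - t} \<psi>) / t) \<longlongrightarrow> L) (at_right 0)"
proof (rule tendstoI)
  fix e :: real
  assume e: "e > 0"
  obtain x' where x': "x' < x" "\<And>y. x' < y \<Longrightarrow> y < x \<Longrightarrow> dist (\<psi> y) L < e / 2"
    using tendstoD[OF lim, of "e / 2"] e unfolding eventually_at_left_field by auto
  show "eventually (\<lambda>t. dist ((integral {a..x} \<psi> - integral {a..x - t} \<psi>) / t) L < e) (at_right 0)"
    unfolding eventually_at_right_field
  proof (intro exI[of _ "min (x - x') (x - a)"] conjI allI impI)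
    fix t :: real
    assume t: "0 < t" "t < min (x - x') (x - a)"
    have "integral {a..x - t} \<psi> + integral {x - t..x} \<psi> = integral {a..x} \<psi>"
      using x t integrable_on_subinterval[OF \<psi>, of a x]
      by (intro Henstock_Kurzweil_Integration.integral_combine) auto
    then have "(integral {a..x} \<psi> - integral {a..x - t} \<psi>) / t - L = (integral {x - t..x} \<psi> - L * t) / t"
      using t by (simp add: field_simps)
    moreover have "\<bar>integral {x - t..x} \<psi> - L * (x - (x - t))\<bar> \<le> e / 2 * (x - (x - t))"
    proof (rule integral_near_const)
      show "\<psi> integrable_on {x - t..x}"
        by (rule integrable_on_subinterval[OF \<psi>]) (use x t in auto)
      show "\<bar>\<psi> y - L\<bar> \<le> e / 2" if "y \<in> {x - t<..<x}" for y
        using x'(2)[of y] that t by (simp add: dist_real_def)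
    qed (use t e in auto)
    then have "\<bar>integral {x - t..x} \<psi> - L * t\<bar> < e * t"
      using mult_pos_pos[OF e t(1)] by simp
    ultimately show "dist ((integral {a..x} \<psi> - integral {a..x - t} \<psi>) / t) L < e"
      using t by (simp add: dist_real_def abs_divide divide_less_eq)
  qed (use x' x in auto)
qed

lemma lap_right_product_remainder:
  fixes U G Z :: "real \<Rightarrow> real"
  assumes xb: "x < b"
    and cont: "continuous_on {x..b} U" "continuous_on {x..b} G" "continuous_on {x..b} Z"
    and G': "((\<lambda>t. (G (x + t) - G x) / t) \<longlongrightarrow> \<gamma>) (at_right 0)"
    and Z': "((\<lambda>t. (Z (x + t) - Z x) / t) \<longlongrightarrow> U x * \<gamma>) (at_right 0)"
  shows "((\<lambda>s. lap_right (\<lambda>y. U y * (G y - G x) - Z y) b x s) \<longlongrightarrow> 0) at_top"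
proof -
  have "((\<lambda>t. U (x + t)) \<longlongrightarrow> U x) (at_right 0)"
    using continuous_on_Icc_at_rightD[OF continuous_on_translate_Icc[OF cont(1)]] xb by simp
  then have "((\<lambda>t. U (x + t) * ((G (x + t) - G x) / t) - (Z (x + t) - Z x) / t) \<longlongrightarrow> U x * \<gamma> - U x * \<gamma>) (at_right 0)"
    by (intro tendsto_intros G' Z')
  moreover have "U (x + t) * ((G (x + t) - G x) / t) - (Z (x + t) - Z x) / t
      = (U (x + t) * (G (x + t) - G x) - Z (x + t) - (U x * (G x - G x) - Z x)) / t" for t
    by (cases "t = 0") (simp_all add: field_simps)
  ultimately show ?thesis
    using cont by (intro lap_right_tendsto[OF xb]) (auto intro!: continuous_intros)
qed

text \<open>Writing W = U (G + c) - c V - Z as (G x + c) U - c V + R with R y = U y (G y - G x) - Z y,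
  the Laplace quotient of R vanishes, and the signs of G x + c and c turn the bounds on U and V
  into a lower bound for W.\<close>

lemma lap_right_product_lower:
  fixes U V G Z :: "real \<Rightarrow> real"
  assumes xb: "x < b"
    and cont: "continuous_on {x..b} U" "continuous_on {x..b} V" "continuous_on {x..b} G" "continuous_on {x..b} Z"
    and c: "0 \<le> c" "0 \<le> G x + c"
    and G': "((\<lambda>t. (G (x + t) - G x) / t) \<longlongrightarrow> \<gamma>) (at_right 0)"
    and Z': "((\<lambda>t. (Z (x + t) - Z x) / t) \<longlongrightarrow> U x * \<gamma>) (at_right 0)"
    and U: "\<And>e. e > 0 \<Longrightarrow> eventually (\<lambda>s. p - e < lap_right U b x s) at_top"
    and V: "\<And>e. e > 0 \<Longrightarrow> eventually (\<lambda>s. lap_right V b x s < p + e) at_top"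
    and e: "e > 0"
  shows "eventually (\<lambda>s. p * G x - e < lap_right (\<lambda>y. U y * (G y + c) - c * V y - Z y) b x s) at_top"
proof -
  define R where "R y = U y * (G y - G x) - Z y" for y
  have R: "continuous_on {x..b} R"
    unfolding R_def by (intro continuous_intros cont)
  have UV: "continuous_on {x..b} (\<lambda>y. (G x + c) * U y + - c * V y)"
    by (intro continuous_intros cont)
  have W: "(\<lambda>y. U y * (G y + c) - c * V y - Z y) = (\<lambda>y. ((G x + c) * U y + - c * V y) + R y)"
    by (auto simp: R_def algebra_simps)
  have "lap_right (\<lambda>y. (G x + c) * U y + - c * V y) b x s
      = lap_right (\<lambda>y. (G x + c) * U y) b x s + lap_right (\<lambda>y. - c * V y) b x s" for s
    by (rule lap_right_add) (intro continuous_intros cont)+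
  then have split: "lap_right (\<lambda>y. U y * (G y + c) - c * V y - Z y) b x s
      = (G x + c) * lap_right U b x s - c * lap_right V b x s + lap_right R b x s" for s
    unfolding W lap_right_add[OF UV R] by (simp add: lap_right_cmult lap_right_uminus)
  define e1 where "e1 = e / (G x + 2 * c + 1)"
  have e1: "e1 > 0" "e1 * (G x + 2 * c + 1) = e"
    using c e by (auto simp: e1_def)
  have "eventually (\<lambda>s. \<bar>lap_right R b x s\<bar> < e1) at_top"
    using tendstoD[OF lap_right_product_remainder[OF xb cont(1,3,4) G' Z'] e1(1)]
    by (simp add: R_def[abs_def] dist_real_def)
  with U[OF e1(1)] V[OF e1(1)] show ?thesis
  proof eventually_elim
    case (elim s)
    have "(G x + c) * (p - e1) \<le> (G x + c) * lap_right U b x s"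
      using elim(1) c by (intro mult_left_mono) auto
    moreover have "c * lap_right V b x s \<le> c * (p + e1)"
      using elim(2) c by (intro mult_left_mono) auto
    moreover have "(G x + c) * (p - e1) - c * (p + e1) - e1 = p * G x - e"
      using e1(2) by (simp add: algebra_simps)
    ultimately show ?case
      using elim(3) split[of s] by (smt (verit))
  qed
qed

lemma lap_left_product_lower:
  fixes U V G Z :: "real \<Rightarrow> real"
  assumes ax: "a < x"
    and cont: "continuous_on {a..x} U" "continuous_on {a..x} V" "continuous_on {a..x} G" "continuous_on {a..x} Z"
    and c: "0 \<le> c" "0 \<le> G x + c"
    and G': "((\<lambda>t. (G x - G (x - t)) / t) \<longlongrightarrow> \<gamma>) (at_right 0)"
    and Z': "((\<lambda>t. (Z x - Z (x - t)) / t) \<longlongrightarrow> U x * \<gamma>) (at_right 0)"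
    and U: "\<And>e. e > 0 \<Longrightarrow> eventually (\<lambda>s. p - e < lap_left U a x s) at_top"
    and V: "\<And>e. e > 0 \<Longrightarrow> eventually (\<lambda>s. lap_left V a x s < p + e) at_top"
    and e: "e > 0"
  shows "eventually (\<lambda>s. p * G x - e < lap_left (\<lambda>y. U y * (G y + c) - c * V y - Z y) a x s) at_top"
proof -
  have refl: "continuous_on {- x..- a} (\<lambda>y. F (- y))" if "continuous_on {a..x} F" for F :: "real \<Rightarrow> real"
    by (rule continuous_on_compose2[OF that]) (auto intro!: continuous_intros)
  have "eventually (\<lambda>s. p * G (- (- x)) - e < lap_right (\<lambda>y. (- U (- y)) * (G (- y) + c) - c * (- V (- y)) - (- Z (- y)))
      (- a) (- x) s) at_top"
  proof (rule lap_right_product_lower[where \<gamma> = "- \<gamma>"])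
    show "((\<lambda>t. (G (- (- x + t)) - G (- (- x))) / t) \<longlongrightarrow> - \<gamma>) (at_right 0)"
      using tendsto_minus[OF G'] by (simp add: minus_divide_left)
    show "((\<lambda>t. (- Z (- (- x + t)) - - Z (- (- x))) / t) \<longlongrightarrow> - U (- (- x)) * - \<gamma>) (at_right 0)"
      using Z' by (simp add: minus_divide_left)
  qed (use ax c e U V in \<open>auto intro!: continuous_intros refl cont simp: lap_left_reflect\<close>)
  then show ?thesis
    by (simp add: lap_left_reflect algebra_simps)
qed

lemma laplace_major_mult:
  fixes f U V G Z :: "real \<Rightarrow> real"
  assumes ab: "a < b" and U: "laplace_major f a b U" and V: "laplace_minor f a b V"
    and G: "continuous_on {a..b} G" and Z: "continuous_on {a..b} Z"
    and c: "0 \<le> c" "\<And>y. y \<in> {a..b} \<Longrightarrow> 0 \<le> G y + c"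
    and R: "\<And>x. x \<in> {a..<b} \<Longrightarrow> \<exists>\<gamma>. ((\<lambda>t. (G (x + t) - G x) / t) \<longlongrightarrow> \<gamma>) (at_right 0) \<and>
                                   ((\<lambda>t. (Z (x + t) - Z x) / t) \<longlongrightarrow> U x * \<gamma>) (at_right 0)"
    and L: "\<And>x. x \<in> {a<..b} \<Longrightarrow> \<exists>\<gamma>. ((\<lambda>t. (G x - G (x - t)) / t) \<longlongrightarrow> \<gamma>) (at_right 0) \<and>
                                   ((\<lambda>t. (Z x - Z (x - t)) / t) \<longlongrightarrow> U x * \<gamma>) (at_right 0)"
  shows "laplace_major (\<lambda>y. f y * G y) a b (\<lambda>y. U y * (G y + c) - c * V y - Z y)"
proof -
  note U' = U[unfolded laplace_major_iff[OF ab]]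
  note V' = V[unfolded laplace_minor_iff_major_uminus laplace_major_iff[OF ab] continuous_on_uminus_iff
      lap_right_uminus lap_left_uminus]
  have sub: "continuous_on S F" if "continuous_on {a..b} F" "S \<subseteq> {a..b}" for S and F :: "real \<Rightarrow> real"
    using continuous_on_subset that by blast
  show ?thesis
    unfolding laplace_major_iff[OF ab]
  proof (intro conjI ballI allI impI)
    show "continuous_on {a..b} (\<lambda>y. U y * (G y + c) - c * V y - Z y)"
      using U' V' by (intro continuous_intros G Z) auto
  next
    fix x e :: real
    assume x: "x \<in> {a..<b}" and e: "e > 0"
    obtain \<gamma> where "((\<lambda>t. (G (x + t) - G x) / t) \<longlongrightarrow> \<gamma>) (at_right 0)"
      "((\<lambda>t. (Z (x + t) - Z x) / t) \<longlongrightarrow> U x * \<gamma>) (at_right 0)"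
      using R[OF x] by blast
    then show "eventually (\<lambda>s. f x * G x - e < lap_right (\<lambda>y. U y * (G y + c) - c * V y - Z y) b x s) at_top"
      using x U' V' c e G Z
      by (intro lap_right_product_lower[where \<gamma> = \<gamma>]) (auto intro: sub simp: algebra_simps)
  next
    fix x e :: real
    assume x: "x \<in> {a<..b}" and e: "e > 0"
    obtain \<gamma> where "((\<lambda>t. (G x - G (x - t)) / t) \<longlongrightarrow> \<gamma>) (at_right 0)"
      "((\<lambda>t. (Z x - Z (x - t)) / t) \<longlongrightarrow> U x * \<gamma>) (at_right 0)"
      using L[OF x] by blast
    then show "eventually (\<lambda>s. f x * G x - e < lap_left (\<lambda>y. U y * (G y + c) - c * V y - Z y) a x s) at_top"
      using x U' V' c e G Z
      by (intro lap_left_product_lower[where \<gamma> = \<gamma>]) (auto intro: sub simp: algebra_simps)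
  qed
qed

lemma bv_integral_right_derivs:
  fixes g U :: "real \<Rightarrow> real"
  assumes g: "bounded_variation_on g a b" and U: "continuous_on {a..b} U" and x: "a \<le> x" "x < b"
  shows "\<exists>\<gamma>. ((\<lambda>t. (integral {a..x + t} g - integral {a..x} g) / t) \<longlongrightarrow> \<gamma>) (at_right 0) \<and>
    ((\<lambda>t. (integral {a..x + t} (\<lambda>t. U t * g t) - integral {a..x} (\<lambda>t. U t * g t)) / t) \<longlongrightarrow> U x * \<gamma>) (at_right 0)"
proof -
  have ab: "a < b"
    using x by simp
  have gi: "g integrable_on {a..b}"
    using cont_mult_bv_integrable(1)[OF ab continuous_on_const g, of 1] by simp
  obtain \<gamma> where \<gamma>: "(g \<longlongrightarrow> \<gamma>) (at_right x)"
    using bv_has_right_limit[OF g x] by blast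
  have "(U \<longlongrightarrow> U x) (at_right x)"
    using continuous_on_subset[OF U, of "{x..b}"] x by (intro continuous_on_Icc_at_rightD) auto
  then show ?thesis
    using \<gamma> by (intro exI[of _ \<gamma>] conjI integral_right_quotient_tendsto[OF gi x]
        integral_right_quotient_tendsto[OF cont_mult_bv_integrable(1)[OF ab U g] x] tendsto_mult)
qed

lemma bv_integral_left_derivs:
  fixes g U :: "real \<Rightarrow> real"
  assumes g: "bounded_variation_on g a b" and U: "continuous_on {a..b} U" and x: "a < x" "x \<le> b"
  shows "\<exists>\<gamma>. ((\<lambda>t. (integral {a..x} g - integral {a..x - t} g) / t) \<longlongrightarrow> \<gamma>) (at_right 0) \<and>
    ((\<lambda>t. (integral {a..x} (\<lambda>t. U t * g t) - integral {a..x - t} (\<lambda>t. U t * g t)) / t) \<longlongrightarrow> U x * \<gamma>) (at_right 0)"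
proof -
  have ab: "a < b"
    using x by simp
  have gi: "g integrable_on {a..b}"
    using cont_mult_bv_integrable(1)[OF ab continuous_on_const g, of 1] by simp
  obtain \<gamma> where \<gamma>: "(g \<longlongrightarrow> \<gamma>) (at_left x)"
    using bv_has_left_limit[OF g x] by blast
  have "(U \<longlongrightarrow> U x) (at_left x)"
    using continuous_on_subset[OF U, of "{a..x}"] x by (intro continuous_on_Icc_at_leftD) auto
  then show ?thesis
    using \<gamma> by (intro exI[of _ \<gamma>] conjI integral_left_quotient_tendsto[OF gi x]
        integral_left_quotient_tendsto[OF cont_mult_bv_integrable(1)[OF ab U g] x] tendsto_mult)
qed

lemma laplace_major_mult_integral:
  fixes f g U V :: "real \<Rightarrow> real"
  assumes ab: "a < b" and g: "bounded_variation_on g a b"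
    and U: "laplace_major f a b U" and V: "laplace_minor f a b V"
    and c: "0 \<le> c" "\<And>y. y \<in> {a..b} \<Longrightarrow> \<bar>integral {a..y} g\<bar> \<le> c"
  shows "laplace_major (\<lambda>y. f y * integral {a..y} g) a b
           (\<lambda>y. U y * (integral {a..y} g + c) - c * V y - integral {a..y} (\<lambda>t. U t * g t))"
proof -
  have Uc: "continuous_on {a..b} U"
    using U by (simp add: laplace_major_def)
  show ?thesis
  proof (rule laplace_major_mult[OF ab U V])
    show "continuous_on {a..b} (\<lambda>y. integral {a..y} g)"
      using cont_mult_bv_integrable(1)[OF ab continuous_on_const g, of 1]
      by (intro indefinite_integral_continuous_1) simp
    show "continuous_on {a..b} (\<lambda>y. integral {a..y} (\<lambda>t. U t * g t))"
      by (intro indefinite_integral_continuous_1 cont_mult_bv_integrable(1)[OF ab Uc g])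
    show "0 \<le> integral {a..y} g + c" if "y \<in> {a..b}" for y
      using c(2)[OF that] by linarith
  qed (use c(1) bv_integral_right_derivs[OF g Uc] bv_integral_left_derivs[OF g Uc] in auto)
qed

lemma laplace_minor_mult_integral:
  fixes f g U V :: "real \<Rightarrow> real"
  assumes ab: "a < b" and g: "bounded_variation_on g a b"
    and U: "laplace_major f a b U" and V: "laplace_minor f a b V"
    and c: "0 \<le> c" "\<And>y. y \<in> {a..b} \<Longrightarrow> \<bar>integral {a..y} g\<bar> \<le> c"
  shows "laplace_minor (\<lambda>y. f y * integral {a..y} g) a b
           (\<lambda>y. V y * (integral {a..y} g + c) - c * U y - integral {a..y} (\<lambda>t. V t * g t))"
proof -
  have "laplace_major (\<lambda>x. - f x) a b (\<lambda>x. - V x)" "laplace_minor (\<lambda>x. - f x) a b (\<lambda>x. - U x)"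
    using U V by (simp_all add: laplace_minor_iff_major_uminus)
  from laplace_major_mult_integral[OF ab g this c]
  show ?thesis
    unfolding laplace_minor_iff_major_uminus by (simp add: algebra_simps)
qed

lemma abs_integral_le_bv:
  fixes g :: "real \<Rightarrow> real"
  assumes ab: "a < b" and g: "bounded_variation_on g a b" and y: "y \<in> {a..b}"
  shows "\<bar>integral {a..y} g\<bar> \<le> (\<bar>g a\<bar> + variation g a b) * (b - a)"
proof -
  have "norm (integral {a..y} g) \<le> integral {a..y} (\<lambda>_. \<bar>g a\<bar> + variation g a b)"
    using y bv_bounded[OF g] cont_mult_bv_integrable(1)[OF ab continuous_on_const g, of 1]
    by (intro integral_norm_bound_integral) (auto intro: integrable_on_subinterval)
  also have "\<dots> = (\<bar>g a\<bar> + variation g a b) * (y - a)"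
    using y by (simp add: mult.commute)
  also have "\<dots> \<le> (\<bar>g a\<bar> + variation g a b) * (b - a)"
    using y bv_bounded[OF g, of a] ab by (intro mult_left_mono) auto
  finally show ?thesis
    by simp
qed

lemma mult_integral_increment_estimate:
  fixes X Y F g :: "real \<Rightarrow> real"
  assumes ab: "a \<le> b"
    and Xg: "(\<lambda>t. X t * g t) integrable_on {a..b}" and Fg: "(\<lambda>t. F t * g t) integrable_on {a..b}"
    and X: "\<And>y. y \<in> {a..b} \<Longrightarrow> \<bar>X y - F y\<bar> \<le> \<eta>" and XY: "\<bar>X b - Y b\<bar> \<le> \<eta>"
    and g: "\<And>y. y \<in> {a..b} \<Longrightarrow> \<bar>g y\<bar> \<le> B" "B * (b - a) \<le> c" and G: "\<bar>integral {a..b} g\<bar> \<le> c"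
  shows "\<bar>X b * (integral {a..b} g + c) - c * Y b - integral {a..b} (\<lambda>t. X t * g t)
          - (F b * integral {a..b} g - integral {a..b} (\<lambda>t. F t * g t))\<bar> \<le> 3 * \<eta> * c"
proof -
  have \<eta>: "0 \<le> \<eta>" and c: "0 \<le> c"
    using X[of b] G ab by auto
  have XFg: "(\<lambda>t. (X t - F t) * g t) integrable_on {a..b}"
    using integrable_diff[OF Xg Fg] by (simp add: left_diff_distrib)
  have "norm (integral {a..b} (\<lambda>t. (X t - F t) * g t)) \<le> integral {a..b} (\<lambda>t. \<eta> * B)"
    using X g \<eta> by (intro integral_norm_bound_integral XFg) (auto simp: abs_mult intro!: mult_mono)
  also have "\<dots> \<le> \<eta> * c"
    using mult_left_mono[OF g(2) \<eta>] ab by (simp add: mult_ac)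
  finally have "\<bar>integral {a..b} (\<lambda>t. (X t - F t) * g t)\<bar> \<le> \<eta> * c"
    by simp
  moreover have "integral {a..b} (\<lambda>t. (X t - F t) * g t) = integral {a..b} (\<lambda>t. X t * g t) - integral {a..b} (\<lambda>t. F t * g t)"
    using Xg Fg by (simp add: left_diff_distrib integral_diff)
  moreover have "\<bar>(X b - F b) * integral {a..b} g\<bar> \<le> \<eta> * c"
    unfolding abs_mult using X[of b] G ab \<eta> by (intro mult_mono) auto
  moreover have "\<bar>c * (X b - Y b)\<bar> \<le> \<eta> * c"
    using mult_left_mono[OF XY c] c by (simp add: abs_mult mult.commute)
  ultimately show ?thesis
    by (simp add: abs_le_iff algebra_simps)
qed

text \<open>Choosing the major and minor function of f uniformly \<eta>-close to its indefinite integral F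
  makes the increments of both W1 and W2 3 \<eta> c-close to T.\<close>

lemma laplace_mult_integral_close:
  fixes f g :: "real \<Rightarrow> real"
  assumes ab: "a < b" and f: "laplace_integrable f a b" and g: "bounded_variation_on g a b" and e: "e > 0"
  defines "T \<equiv> laplace_integral f a b * integral {a..b} g - integral {a..b} (\<lambda>x. laplace_integral f a x * g x)"
  shows "\<exists>W1 W2. laplace_major (\<lambda>x. f x * integral {a..x} g) a b W1 \<and>
    laplace_minor (\<lambda>x. f x * integral {a..x} g) a b W2 \<and> W1 b - W1 a \<le> T + e \<and> T - e \<le> W2 b - W2 a"
proof -
  define F where "F x = laplace_integral f a x" for x
  define Bg where "Bg = \<bar>g a\<bar> + variation g a b"
  define c where "c = Bg * (b - a)"
  have G: "\<bar>integral {a..y} g\<bar> \<le> c" if "y \<in> {a..b}" for y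
    using abs_integral_le_bv[OF ab g that] by (simp add: Bg_def c_def)
  then have c: "0 \<le> c"
    using ab by force
  have Xg: "(\<lambda>t. X t * g t) integrable_on {a..b}" if "continuous_on {a..b} X" for X
    by (rule cont_mult_bv_integrable(1)[OF ab that g])
  note Fg = Xg[OF laplace_indefinite_integral_continuous[OF f, folded F_def]]
  define \<eta> where "\<eta> = e / (3 * c + 1)"
  have \<eta>: "\<eta> > 0" "3 * \<eta> * c \<le> e"
    using e c by (auto simp: \<eta>_def field_simps)
  obtain U V where UV: "laplace_major f a b U" "laplace_minor f a b V" "U a = 0" "V a = 0"
    "\<And>y. y \<in> {a..b} \<Longrightarrow> V y \<le> F y \<and> F y \<le> U y \<and> U y - V y < \<eta>"
    using laplace_integrable_obtain_sandwich[OF f \<eta>(1), folded F_def] by blast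
  have Ug: "(\<lambda>t. U t * g t) integrable_on {a..b}" and Vg: "(\<lambda>t. V t * g t) integrable_on {a..b}"
    using UV(1,2) Xg by (simp_all add: laplace_major_def laplace_minor_def)
  have near: "\<bar>U y - F y\<bar> \<le> \<eta>" "\<bar>V y - F y\<bar> \<le> \<eta>" "\<bar>U y - V y\<bar> \<le> \<eta>" "\<bar>V y - U y\<bar> \<le> \<eta>"
    if "y \<in> {a..b}" for y
    using UV(5)[OF that] by auto
  have gB: "\<bar>g y\<bar> \<le> Bg" if "y \<in> {a..b}" for y
    using bv_bounded[OF g that] by (simp add: Bg_def)
  have est: "\<bar>X b * (integral {a..b} g + c) - c * Y b - integral {a..b} (\<lambda>t. X t * g t)
      - (F b * integral {a..b} g - integral {a..b} (\<lambda>t. F t * g t))\<bar> \<le> 3 * \<eta> * c"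
    if "(\<lambda>t. X t * g t) integrable_on {a..b}" "\<And>y. y \<in> {a..b} \<Longrightarrow> \<bar>X y - F y\<bar> \<le> \<eta>" "\<bar>X b - Y b\<bar> \<le> \<eta>"
    for X Y
    using ab by (intro mult_integral_increment_estimate[where X = X and Y = Y and F = F and g = g and a = a
          and b = b and B = Bg and c = c, OF _ that(1) Fg that(2,3) gB]) (use G[of b] in \<open>auto simp: c_def\<close>)
  define W1 where "W1 y = U y * (integral {a..y} g + c) - c * V y - integral {a..y} (\<lambda>t. U t * g t)" for y
  define W2 where "W2 y = V y * (integral {a..y} g + c) - c * U y - integral {a..y} (\<lambda>t. V t * g t)" for y
  have "laplace_major (\<lambda>x. f x * integral {a..x} g) a b W1" "laplace_minor (\<lambda>x. f x * integral {a..x} g) a b W2"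
    using laplace_major_mult_integral[OF ab g UV(1,2) c G] laplace_minor_mult_integral[OF ab g UV(1,2) c G]
    by (simp_all add: W1_def[abs_def] W2_def[abs_def])
  moreover have "\<bar>W1 b - W1 a - T\<bar> \<le> 3 * \<eta> * c" "\<bar>W2 b - W2 a - T\<bar> \<le> 3 * \<eta> * c"
    using est[of U V, OF Ug near(1) near(3)] est[of V U, OF Vg near(2) near(4)] UV(3,4) ab
    by (simp_all add: W1_def W2_def T_def F_def)
  ultimately show ?thesis
    using \<eta>(2) unfolding abs_le_iff by (intro exI[of _ W1] exI[of _ W2]) auto
qed

lemma laplace_integrable_mult_integral:
  fixes f g :: "real \<Rightarrow> real"
  assumes "a < b" "laplace_integrable f a b" "bounded_variation_on g a b"
  shows "laplace_integrable (\<lambda>x. f x * integral {a..x} g) a b"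
    and "laplace_integral (\<lambda>x. f x * integral {a..x} g) a b
           = laplace_integral f a b * integral {a..b} g - integral {a..b} (\<lambda>x. laplace_integral f a x * g x)"
  using laplace_mult_integral_close[OF assms] by (intro laplace_integrableI[OF assms(1)]; blast)+

theorem theorem6p3:
  fixes f g F G :: "real \<Rightarrow> real" and a b :: real
  assumes "a < b"
    and "laplace_integrable f a b"
    and "bounded_variation_on g a b"
    and "\<And>x. x \<in> {a..b} \<Longrightarrow> F x = laplace_integral f a x"
    and "\<And>x. x \<in> {a..b} \<Longrightarrow> G x = laplace_integral g a x"
  shows "laplace_integrable (\<lambda>x. f x * G x) a b \<and>
         perron_integrable (\<lambda>x. F x * g x) a b \<and>
         laplace_integral (\<lambda>x. f x * G x) a b
           = F b * G b - perron_integral (\<lambda>x. F x * g x) a b"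
proof -
  note ab = assms(1) and g = assms(3)
  have G: "G x = integral {a..x} g" if "x \<in> {a..b}" for x
  proof (cases "x = a")
    case False
    then have "a < x"
      using that by auto
    from cont_mult_bv_integrable(2)[OF this continuous_on_const bounded_variation_on_subinterval[OF g], of 1]
    show ?thesis
      using assms(5) that by simp
  qed (use assms(5)[of a] ab in \<open>simp add: laplace_integral_def\<close>)
  have "continuous_on {a..b} F"
    using laplace_indefinite_integral_continuous[OF assms(2)] assms(4) continuous_on_cong by blast
  note perron = cont_mult_bv_integrable(3,4)[OF ab this g]
  have "integral {a..b} (\<lambda>x. F x * g x) = integral {a..b} (\<lambda>x. laplace_integral f a x * g x)"
    using assms(4) by (intro integral_cong) auto
  moreover note laplace_integral_cong[of a b "\<lambda>x. f x * G x" "\<lambda>x. f x * integral {a..x} g"]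
  ultimately show ?thesis
    using laplace_integrable_mult_integral[OF ab assms(2) g] perron G assms(4) ab by simp
qed

end
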